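(* Let $G=(V,E,\partial)$ be a finite graph without self-loops and without double edges, with all edge lengths $\ell_e=1$, and let $\mathcal G$ be a vertex space of $G$ with discrete generalised Laplacian $\Delta_{\mathcal G}$. Then for all $t>0$ (indeed all $t\in\mathbb R$) $$\operatorname{tr}e^{-t\Delta_{\mathcal G}}=e^{-t}\sum_{n=0}^\infty\sum_{c\in C_n}\frac{t^n}{n!}W_{\mathcal G}(c)=e^{-t}\sum_{c\in C}\frac{t^{|c|}}{|c|!}W_{\mathcal G}(c).$$
   Context: $G=(V,E,\partial)$, $\partial\colon E\to V\times V$, $e\mapsto(\partial_-e,\partial_+e)$; $E_v=\{e:\partial_+e=v\}\sqcup\{e:\partial_-e=v\}$, $|E_v|\ge1$. Write $v\sim w$ if $v,w$ are joined by an edge (unique, since no double edges), and for $e\in E_v$ let $v_e$ be the other endpoint of $e$. A vertex space is $\mathcal G=\bigoplus_v\mathcal G_v$ with linear subspaces $\mathcal G_v\subseteq\mathbb C^{E_v}$, $P_v$ the orthogonal projection of $\mathbb C^{E_v}$ onto $\mathcal G_v$; $\mathcal G$ carries the norm $\|F\|^2=\sum_v\sum_{e\in E_v}|F_e(v)|^2$. With $\ell_e=1$, the discrete generalised Laplacian on $\mathcal G$ is $(\Delta_{\mathcal G}F)(v)=P_v\big(\{F_e(v)-F_e(v_e)\}_{e\in E_v}\big)$. For $v\sim w$ joined by edge $e$, let $A^{\max}(v,w)\colon\mathbb C^{E_w}\to\mathbb C^{E_v}$ send $F$ to the vector whose $e$-component is $F_e$ and whose other components are $0$, and set $A_{\mathcal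 G}(v,w)=P_vA^{\max}(v,w)|_{\mathcal G_w}\colon\mathcal G_w\to\mathcal G_v$. $C_n$ ($n\ge0$) is the set of closed combinatorial paths of length $n$, i.e., sequences $c=(v_0,\dots,v_{n-1})$ of vertices with $v_i\sim v_{i+1}$ ($0\le i\le n-2$) and $v_{n-1}\sim v_0$ (for $n=0$ the paths are single vertices $v_0$; $C_1=\emptyset$); $C=\bigcup_nC_n$ and $|c|=n$ for $c\in C_n$. The weight is $W_{\mathcal G}(c)=\operatorname{tr}\big(A_{\mathcal G}(v_0,v_1)A_{\mathcal G}(v_1,v_2)\cdots A_{\mathcal G}(v_{n-1},v_0)\big)$ (trace on $\mathcal G_{v_0}$; for $n=0$ the empty product is the identity of $\mathcal G_{v_0}$, so $W_{\mathcal G}(c)=\dim\mathcal G_{v_0}$). *)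

theory Defs
  imports "HOL-Analysis.Analysis"
begin

text \<open>Vectors in C^X are represented as functions 'i => complex (only the values on X matter;
  elements of the subspaces considered vanish outside X).\<close>

definition inner_on :: "'i set \<Rightarrow> ('i \<Rightarrow> complex) \<Rightarrow> ('i \<Rightarrow> complex) \<Rightarrow> complex" where
  "inner_on X a b = (\<Sum>x\<in>X. cnj (a x) * b x)"

definition subspace_on :: "'i set \<Rightarrow> ('i \<Rightarrow> complex) set \<Rightarrow> bool" where
  "subspace_on X S \<longleftrightarrow> (\<lambda>_. 0) \<in> S
     \<and> (\<forall>f\<in>S. \<forall>g\<in>S. (\<lambda>x. f x + g x) \<in> S)
     \<and> (\<forall>c. \<forall>f\<in>S. (\<lambda>x. c * f x) \<in> S)
     \<and> (\<forall>f\<in>S. \<forall>x. x \<notin> X \<longrightarrow> f x = 0)"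

definition proj_on :: "'i set \<Rightarrow> ('i \<Rightarrow> complex) set \<Rightarrow> ('i \<Rightarrow> complex) \<Rightarrow> ('i \<Rightarrow> complex)" where
  "proj_on X S f = (THE g. g \<in> S \<and> (\<forall>h\<in>S. inner_on X h (\<lambda>x. f x - g x) = 0))"

definition onb_on :: "'i set \<Rightarrow> ('i \<Rightarrow> complex) set \<Rightarrow> ('i \<Rightarrow> complex) set \<Rightarrow> bool" where
  "onb_on X S B \<longleftrightarrow> finite B \<and> B \<subseteq> S
     \<and> (\<forall>b\<in>B. \<forall>b'\<in>B. inner_on X b b' = (if b = b' then 1 else 0))
     \<and> (\<forall>f\<in>S. \<exists>c. \<forall>x\<in>X. f x = (\<Sum>b\<in>B. c b * b x))"

definition trace_on :: "'i set \<Rightarrow> ('i \<Rightarrow> complex) set \<Rightarrow> (('i \<Rightarrow> complex) \<Rightarrow> ('i \<Rightarrow> complex)) \<Rightarrow> complex" where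
  "trace_on X S T = (let B = (SOME B. onb_on X S B) in \<Sum>b\<in>B. inner_on X b (T b))"

definition op_exp :: "(('i \<Rightarrow> complex) \<Rightarrow> ('i \<Rightarrow> complex)) \<Rightarrow> ('i \<Rightarrow> complex) \<Rightarrow> ('i \<Rightarrow> complex)" where
  "op_exp T F = (\<lambda>x. \<Sum>k. (T ^^ k) F x / of_nat (fact k))"

definition finite_simple_graph :: "'v set \<Rightarrow> 'e set \<Rightarrow> ('e \<Rightarrow> 'v \<times> 'v) \<Rightarrow> bool" where
  "finite_simple_graph V E d \<longleftrightarrow> finite V \<and> finite E
     \<and> (\<forall>e\<in>E. fst (d e) \<in> V \<and> snd (d e) \<in> V)
     \<and> (\<forall>e\<in>E. fst (d e) \<noteq> snd (d e))
     \<and> (\<forall>e\<in>E. \<forall>e'\<in>E. {fst (d e), snd (d e)} = {fst (d e'), snd (d e')} \<longrightarrow> e = e')"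

definition edges_at :: "'e set \<Rightarrow> ('e \<Rightarrow> 'v \<times> 'v) \<Rightarrow> 'v \<Rightarrow> 'e set" where
  "edges_at E d v = {e\<in>E. snd (d e) = v} \<union> {e\<in>E. fst (d e) = v}"

definition other_end :: "('e \<Rightarrow> 'v \<times> 'v) \<Rightarrow> 'e \<Rightarrow> 'v \<Rightarrow> 'v" where
  "other_end d e v = (if fst (d e) = v then snd (d e) else fst (d e))"

definition adj :: "'e set \<Rightarrow> ('e \<Rightarrow> 'v \<times> 'v) \<Rightarrow> 'v \<Rightarrow> 'v \<Rightarrow> bool" where
  "adj E d v w \<longleftrightarrow> (\<exists>e\<in>E. {fst (d e), snd (d e)} = {v, w} \<and> v \<noteq> w)"

definition edge_betw :: "'e set \<Rightarrow> ('e \<Rightarrow> 'v \<times> 'v) \<Rightarrow> 'v \<Rightarrow> 'v \<Rightarrow> 'e" where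
  "edge_betw E d v w = (THE e. e \<in> E \<and> {fst (d e), snd (d e)} = {v, w})"

definition vertex_space :: "'v set \<Rightarrow> 'e set \<Rightarrow> ('e \<Rightarrow> 'v \<times> 'v) \<Rightarrow> ('v \<Rightarrow> ('e \<Rightarrow> complex) set) \<Rightarrow> bool" where
  "vertex_space V E d Gs \<longleftrightarrow> (\<forall>v\<in>V. subspace_on (edges_at E d v) (Gs v))"

text \<open>Index set of the ambient space: pairs (v,e) with e in E_v; F (v,e) = F_e(v).\<close>
definition idx :: "'v set \<Rightarrow> 'e set \<Rightarrow> ('e \<Rightarrow> 'v \<times> 'v) \<Rightarrow> ('v \<times> 'e) set" where
  "idx V E d = {(v, e). v \<in> V \<and> e \<in> edges_at E d v}"

text \<open>The vertex space G = direct sum of the G_v, inside C^{idx}.\<close>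
definition vspace :: "'v set \<Rightarrow> 'e set \<Rightarrow> ('e \<Rightarrow> 'v \<times> 'v) \<Rightarrow> ('v \<Rightarrow> ('e \<Rightarrow> complex) set) \<Rightarrow> ('v \<times> 'e \<Rightarrow> complex) set" where
  "vspace V E d Gs = {F. (\<forall>v\<in>V. (\<lambda>e. F (v, e)) \<in> Gs v) \<and> (\<forall>v e. v \<notin> V \<longrightarrow> F (v, e) = 0)}"

definition disc_lap :: "'v set \<Rightarrow> 'e set \<Rightarrow> ('e \<Rightarrow> 'v \<times> 'v) \<Rightarrow> ('v \<Rightarrow> ('e \<Rightarrow> complex) set)
    \<Rightarrow> ('v \<times> 'e \<Rightarrow> complex) \<Rightarrow> ('v \<times> 'e \<Rightarrow> complex)" where
  "disc_lap V E d Gs F = (\<lambda>(v, e). if v \<in> V then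
      proj_on (edges_at E d v) (Gs v)
        (\<lambda>e'. if e' \<in> edges_at E d v then F (v, e') - F (other_end d e' v, e') else 0) e
    else 0)"

definition heat_trace :: "'v set \<Rightarrow> 'e set \<Rightarrow> ('e \<Rightarrow> 'v \<times> 'v) \<Rightarrow> ('v \<Rightarrow> ('e \<Rightarrow> complex) set) \<Rightarrow> real \<Rightarrow> complex" where
  "heat_trace V E d Gs t = trace_on (idx V E d) (vspace V E d Gs)
      (op_exp (\<lambda>F x. complex_of_real (- t) * disc_lap V E d Gs F x))"

text \<open>A^max(v,w) and A_G(v,w) (the latter used only on G_w).\<close>
definition A_max :: "'e set \<Rightarrow> ('e \<Rightarrow> 'v \<times> 'v) \<Rightarrow> 'v \<Rightarrow> 'v \<Rightarrow> ('e \<Rightarrow> complex) \<Rightarrow> ('e \<Rightarrow> complex)" where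
  "A_max E d v w F = (\<lambda>e'. if e' = edge_betw E d v w then F e' else 0)"

definition A_G :: "'e set \<Rightarrow> ('e \<Rightarrow> 'v \<times> 'v) \<Rightarrow> ('v \<Rightarrow> ('e \<Rightarrow> complex) set) \<Rightarrow> 'v \<Rightarrow> 'v
    \<Rightarrow> ('e \<Rightarrow> complex) \<Rightarrow> ('e \<Rightarrow> complex)" where
  "A_G E d Gs v w F = proj_on (edges_at E d v) (Gs v) (A_max E d v w F)"

text \<open>Closed combinatorial paths of length n, as vertex lists (v_0,...,v_{n-1});
  for n = 0 the paths are the single vertices, represented as one-element lists [v_0].\<close>
definition closed_paths :: "'v set \<Rightarrow> 'e set \<Rightarrow> ('e \<Rightarrow> 'v \<times> 'v) \<Rightarrow> nat \<Rightarrow> 'v list set" where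
  "closed_paths V E d n = (if n = 0 then {[v] | v. v \<in> V} else
     {c. length c = n \<and> set c \<subseteq> V \<and> (\<forall>i. Suc i < n \<longrightarrow> adj E d (c ! i) (c ! Suc i))
         \<and> adj E d (c ! (n - 1)) (c ! 0)})"

definition all_closed_paths :: "'v set \<Rightarrow> 'e set \<Rightarrow> ('e \<Rightarrow> 'v \<times> 'v) \<Rightarrow> 'v list set" where
  "all_closed_paths V E d = (\<Union>n. closed_paths V E d n)"

text \<open>|c|: the length of a closed path (0 for the one-vertex paths of C_0).\<close>
definition path_len :: "'v list \<Rightarrow> nat" where
  "path_len c = (if length c \<le> 1 then 0 else length c)"

definition weight :: "'e set \<Rightarrow> ('e \<Rightarrow> 'v \<times> 'v) \<Rightarrow> ('v \<Rightarrow> ('e \<Rightarrow> complex) set) \<Rightarrow> 'v list \<Rightarrow> complex" where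
  "weight E d Gs c = (let n = path_len c in
     trace_on (edges_at E d (c ! 0)) (Gs (c ! 0))
       (foldr (\<lambda>i acc. A_G E d Gs (c ! i) (c ! ((i + 1) mod n)) \<circ> acc) [0..<n] id))"

end

theory Submission
  imports Defs
begin

text \<open>Write \<open>\<Delta> = 1 - A\<close>, where \<open>A\<close> carries the value of a function across each edge and projects
  it back onto the vertex space at the other end. Then \<open>e\<^sup>-\<^sup>t\<^sup>\<Delta> = e\<^sup>-\<^sup>t e\<^sup>t\<^sup>A\<close>, so the heat trace is
  \<open>e\<^sup>-\<^sup>t \<Sum>\<^sub>n t\<^sup>n/n! tr A\<^sup>n\<close>. Expanding \<open>A\<^sup>n\<close> block by block, \<open>tr A\<^sup>n\<close> is the sum, over the closed walks
  of length \<open>n\<close>, of the traces of the products of the maps \<open>A\<^sub>\<G>(v,w)\<close> along them, i.e. the sum of the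
  weights of the closed paths of length \<open>n\<close>. Since every weight is bounded by \<open>|E|\<^sup>2\<close> and there are at
  most \<open>|V|\<^sup>n + |V|\<close> closed paths of length \<open>n\<close>, the double series converges absolutely, which also
  gives the unordered sum over all closed paths.\<close>

definition sqnorm_on :: "'i set \<Rightarrow> ('i \<Rightarrow> complex) \<Rightarrow> real" where
  "sqnorm_on X f = (\<Sum>x\<in>X. (cmod (f x))\<^sup>2)"

definition orthonormal_on :: "'i set \<Rightarrow> ('i \<Rightarrow> complex) set \<Rightarrow> bool" where
  "orthonormal_on X B \<longleftrightarrow> (\<forall>b\<in>B. \<forall>b'\<in>B. inner_on X b b' = (if b = b' then 1 else 0))"

lemma sqnorm_on_nonneg: "sqnorm_on X f \<ge> 0"
  unfolding sqnorm_on_def by (simp add: sum_nonneg)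

lemma sqnorm_on_eq_0_iff: "finite X \<Longrightarrow> sqnorm_on X f = 0 \<longleftrightarrow> (\<forall>x\<in>X. f x = 0)"
  unfolding sqnorm_on_def by (subst sum_nonneg_eq_0_iff) auto

lemma sqnorm_on_ge_component: "finite X \<Longrightarrow> x \<in> X \<Longrightarrow> (cmod (f x))\<^sup>2 \<le> sqnorm_on X f"
  unfolding sqnorm_on_def by (rule member_le_sum) auto

lemma inner_on_self: "inner_on X f f = of_real (sqnorm_on X f)"
  unfolding inner_on_def sqnorm_on_def of_real_sum
  by (intro sum.cong refl) (metis complex_norm_square mult.commute)

lemma inner_on_commute: "inner_on X a b = cnj (inner_on X b a)"
  unfolding inner_on_def by (simp add: mult.commute)

lemma inner_on_sum_right:
  "inner_on X a (\<lambda>y. \<Sum>i\<in>I. c i * h i y) = (\<Sum>i\<in>I. c i * inner_on X a (h i))"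
  unfolding inner_on_def
  by (simp add: sum_distrib_left sum_distrib_right mult.left_commute sum.swap[of _ X])

lemma inner_on_sum_left:
  "inner_on X (\<lambda>y. \<Sum>i\<in>I. c i * h i y) a = (\<Sum>i\<in>I. cnj (c i) * inner_on X (h i) a)"
  unfolding inner_on_def
  by (simp add: sum_distrib_left sum_distrib_right mult.assoc sum.swap[of _ X])

lemma inner_on_diff_right: "inner_on X a (\<lambda>y. f y - g y) = inner_on X a f - inner_on X a g"
  unfolding inner_on_def by (simp add: right_diff_distrib sum_subtractf)

lemma inner_on_diff_left: "inner_on X (\<lambda>y. f y - g y) a = inner_on X f a - inner_on X g a"
  unfolding inner_on_def by (simp add: left_diff_distrib sum_subtractf)

lemma inner_on_scale_right: "inner_on X a (\<lambda>y. c * f y) = c * inner_on X a f"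
  unfolding inner_on_def by (simp add: sum_distrib_left mult.left_commute)

lemma inner_on_scale_left: "inner_on X (\<lambda>y. c * f y) a = cnj c * inner_on X f a"
  unfolding inner_on_def by (simp add: sum_distrib_left mult.assoc)

lemma inner_on_cong:
  "(\<And>x. x \<in> X \<Longrightarrow> a x = a' x) \<Longrightarrow> (\<And>x. x \<in> X \<Longrightarrow> b x = b' x) \<Longrightarrow> inner_on X a b = inner_on X a' b'"
  unfolding inner_on_def by (rule sum.cong) auto

lemma subspace_on_zero: "subspace_on X S \<Longrightarrow> (\<lambda>_. 0) \<in> S"
  unfolding subspace_on_def by blast

lemma subspace_on_add: "subspace_on X S \<Longrightarrow> f \<in> S \<Longrightarrow> g \<in> S \<Longrightarrow> (\<lambda>x. f x + g x) \<in> S"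
  unfolding subspace_on_def by blast

lemma subspace_on_scale: "subspace_on X S \<Longrightarrow> f \<in> S \<Longrightarrow> (\<lambda>x. c * f x) \<in> S"
  unfolding subspace_on_def by blast

lemma subspace_on_outside: "subspace_on X S \<Longrightarrow> f \<in> S \<Longrightarrow> x \<notin> X \<Longrightarrow> f x = 0"
  unfolding subspace_on_def by blast

lemma subspace_on_diff:
  assumes "subspace_on X S" "f \<in> S" "g \<in> S"
  shows "(\<lambda>x. f x - g x) \<in> S"
  using subspace_on_add[OF assms(1,2) subspace_on_scale[OF assms(1,3), of "-1"]] by simp

lemma subspace_on_sum:
  assumes "subspace_on X S" "finite I" "h ` I \<subseteq> S"
  shows "(\<lambda>y. \<Sum>i\<in>I. c i * h i y) \<in> S"
  using assms(2,3)
proof (induction I rule: finite_induct)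
  case empty
  then show ?case using subspace_on_zero[OF assms(1)] by simp
next
  case (insert a I)
  then show ?case
    using subspace_on_add[OF assms(1) subspace_on_scale[OF assms(1)]] by simp
qed

lemma sqnorm_orthonormal_on: "orthonormal_on X B \<Longrightarrow> b \<in> B \<Longrightarrow> sqnorm_on X b = 1"
  using inner_on_self[of X b] unfolding orthonormal_on_def by simp

section \<open>Orthonormal bases\<close>

definition orth_residual :: "'i set \<Rightarrow> ('i \<Rightarrow> complex) set \<Rightarrow> ('i \<Rightarrow> complex) \<Rightarrow> ('i \<Rightarrow> complex)" where
  "orth_residual X B f = (\<lambda>y. f y - (\<Sum>b\<in>B. inner_on X b f * b y))"

lemma inner_on_orth_residual:
  assumes "finite B" "orthonormal_on X B" "b0 \<in> B"
  shows "inner_on X b0 (orth_residual X B f) = 0"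
proof -
  have "(\<Sum>b\<in>B. inner_on X b f * inner_on X b0 b) = (\<Sum>b\<in>B. if b = b0 then inner_on X b f else 0)"
    using assms by (intro sum.cong) (auto simp: orthonormal_on_def)
  then show ?thesis
    using assms unfolding orth_residual_def by (simp add: inner_on_diff_right inner_on_sum_right)
qed

lemma bessel_inequality:
  assumes "finite B" "orthonormal_on X B"
  shows "(\<Sum>b\<in>B. (cmod (inner_on X b f))\<^sup>2) \<le> sqnorm_on X f"
proof -
  let ?r = "orth_residual X B f"
  have "inner_on X (\<lambda>y. \<Sum>b\<in>B. inner_on X b f * b y) ?r = 0"
    using inner_on_orth_residual[OF assms] by (simp add: inner_on_sum_left)
  then have "of_real (sqnorm_on X ?r) = inner_on X f ?r"
    unfolding inner_on_self[symmetric] orth_residual_def[of X B f] by (simp add: inner_on_diff_left)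
  also have "\<dots> = inner_on X f f - (\<Sum>b\<in>B. inner_on X b f * inner_on X f b)"
    unfolding orth_residual_def by (simp add: inner_on_diff_right inner_on_sum_right)
  also have "(\<Sum>b\<in>B. inner_on X b f * inner_on X f b) = (\<Sum>b\<in>B. of_real ((cmod (inner_on X b f))\<^sup>2))"
    by (intro sum.cong refl) (metis complex_norm_square inner_on_commute)
  finally have "sqnorm_on X ?r = sqnorm_on X f - (\<Sum>b\<in>B. (cmod (inner_on X b f))\<^sup>2)"
    unfolding inner_on_self of_real_sum[symmetric] of_real_diff[symmetric] of_real_eq_iff .
  then show ?thesis using sqnorm_on_nonneg[of X ?r] by simp
qed

lemma card_orthonormal_le:
  assumes "finite X" "finite B" "orthonormal_on X B"
  shows "card B \<le> card X"
proof -
  let ?\<delta> = "\<lambda>x y. if y = x then 1 else 0 :: complex"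
  have "real (card B) = (\<Sum>b\<in>B. sqnorm_on X b)"
    using sqnorm_orthonormal_on[OF assms(3)] by simp
  also have "\<dots> = (\<Sum>x\<in>X. \<Sum>b\<in>B. (cmod (inner_on X b (?\<delta> x)))\<^sup>2)"
    unfolding sqnorm_on_def inner_on_def
    by (subst sum.swap) (intro sum.cong refl, simp add: if_distrib assms(1) cong: if_cong)
  also have "\<dots> \<le> (\<Sum>x\<in>X. sqnorm_on X (?\<delta> x))"
    by (intro sum_mono bessel_inequality assms)
  also have "\<dots> = real (card X)"
    unfolding sqnorm_on_def using assms(1) by (simp add: if_distrib[of "\<lambda>z. (cmod z)\<^sup>2"] cong: if_cong)
  finally show ?thesis by simp
qed

text \<open>Gram--Schmidt by maximality: an orthonormal family of maximal size spans, since
  otherwise the normalised residual of a vector outside its span would extend it.\<close>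

lemma onb_on_exists:
  assumes "finite X" "subspace_on X S"
  shows "\<exists>B. onb_on X S B"
proof -
  let ?P = "\<lambda>B. finite B \<and> B \<subseteq> S \<and> orthonormal_on X B"
  have "?P {}" by (simp add: orthonormal_on_def)
  moreover have "\<forall>B. ?P B \<longrightarrow> card B < Suc (card X)"
    using card_orthonormal_le[OF assms(1)] le_imp_less_Suc by blast
  ultimately obtain B where B: "?P B" and B_max: "\<forall>B'. ?P B' \<longrightarrow> card B' \<le> card B"
    using ex_has_greatest_nat[of ?P "{}" card "Suc (card X)"] by blast
  have "\<exists>c. \<forall>x\<in>X. f x = (\<Sum>b\<in>B. c b * b x)" if f: "f \<in> S" for f
  proof (cases "sqnorm_on X (orth_residual X B f) = 0")
    case True
    then show ?thesis
      using assms(1) unfolding sqnorm_on_eq_0_iff[OF assms(1)] orth_residual_def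
      by (intro exI[of _ "\<lambda>b. inner_on X b f"]) auto
  next
    case False
    let ?r = "orth_residual X B f"
    have r_pos: "sqnorm_on X ?r > 0" using False sqnorm_on_nonneg[of X ?r] by linarith
    have r_in: "?r \<in> S"
      unfolding orth_residual_def using B f assms(2) by (intro subspace_on_diff subspace_on_sum) auto
    define g where "g = (\<lambda>y. complex_of_real (1 / sqrt (sqnorm_on X ?r)) * ?r y)"
    have g_in: "g \<in> S" unfolding g_def using assms(2) r_in by (rule subspace_on_scale)
    have "(1 / sqrt (sqnorm_on X ?r)) * ((1 / sqrt (sqnorm_on X ?r)) * sqnorm_on X ?r) = 1"
      using r_pos by (simp add: field_simps)
    then have g_unit: "inner_on X g g = 1"
      unfolding g_def inner_on_scale_left inner_on_scale_right inner_on_self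
      by (simp flip: of_real_mult)
    have g_orth: "inner_on X b g = 0" "inner_on X g b = 0" if "b \<in> B" for b
      using inner_on_orth_residual[OF _ _ that] B inner_on_commute[of X g b]
      unfolding g_def inner_on_scale_right by auto
    have g_new: "g \<notin> B" using g_unit g_orth by force
    have "?P (insert g B)"
      using B g_in g_unit g_orth g_new unfolding orthonormal_on_def by auto
    then have "card (insert g B) \<le> card B" using B_max by blast
    then show ?thesis using g_new B by simp
  qed
  then show ?thesis using B unfolding onb_on_def orthonormal_on_def by blast
qed

lemma onb_on_some:
  assumes "finite X" "subspace_on X S"
  shows "onb_on X S (SOME B. onb_on X S B)"
  using onb_on_exists[OF assms] by (rule someI_ex)

lemma onb_on_expansion:
  assumes "onb_on X S B" "subspace_on X S" "f \<in> S"
  shows "f = (\<lambda>y. \<Sum>b\<in>B. inner_on X b f * b y)"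
proof
  fix y
  obtain c where c: "\<forall>x\<in>X. f x = (\<Sum>b\<in>B. c b * b x)"
    using assms unfolding onb_on_def by blast
  have coeff: "inner_on X b0 f = c b0" if "b0 \<in> B" for b0
  proof -
    have "inner_on X b0 f = (\<Sum>b\<in>B. c b * inner_on X b0 b)"
      using c by (subst inner_on_sum_right[symmetric], intro inner_on_cong) auto
    also have "\<dots> = (\<Sum>b\<in>B. if b = b0 then c b else 0)"
      using that assms(1) unfolding onb_on_def by (intro sum.cong) auto
    finally show ?thesis using that assms(1) by (simp add: onb_on_def)
  qed
  show "f y = (\<Sum>b\<in>B. inner_on X b f * b y)"
  proof (cases "y \<in> X")
    case True
    then show ?thesis using c coeff by (auto intro: sum.cong)
  next
    case False
    then have "\<forall>b\<in>B. b y = 0" "f y = 0"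
      using subspace_on_outside[OF assms(2) _ False] assms(1,3) unfolding onb_on_def by auto
    then show ?thesis by (simp add: sum.neutral)
  qed
qed

section \<open>Orthogonal projection\<close>

lemma proj_on_unique:
  assumes "finite X" "subspace_on X S" "g \<in> S" "\<forall>h\<in>S. inner_on X h (\<lambda>x. f x - g x) = 0"
  shows "proj_on X S f = g"
  unfolding proj_on_def
proof (rule the_equality)
  show "g \<in> S \<and> (\<forall>h\<in>S. inner_on X h (\<lambda>x. f x - g x) = 0)" using assms(3,4) ..
  fix g' assume g': "g' \<in> S \<and> (\<forall>h\<in>S. inner_on X h (\<lambda>x. f x - g' x) = 0)"
  let ?d = "\<lambda>x. g' x - g x"
  have d_in: "?d \<in> S" using g' by (intro subspace_on_diff[OF assms(2) _ assms(3)]) simp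
  have "inner_on X ?d (\<lambda>x. f x - g x) = 0" "inner_on X ?d (\<lambda>x. f x - g' x) = 0"
    using assms(4) g' d_in by auto
  then have "inner_on X ?d (\<lambda>x. (f x - g x) - (f x - g' x)) = 0"
    by (simp only: inner_on_diff_right diff_self)
  moreover have "(\<lambda>x. (f x - g x) - (f x - g' x)) = ?d" by auto
  ultimately have "sqnorm_on X ?d = 0" by (simp only: inner_on_self of_real_eq_0_iff)
  then have d_X: "\<forall>x\<in>X. ?d x = 0" by (simp only: sqnorm_on_eq_0_iff[OF assms(1)])
  show "g' = g"
  proof
    fix x
    have "?d x = 0"
      using d_X subspace_on_outside[OF assms(2) d_in, of x] by (cases "x \<in> X") auto
    then show "g' x = g x" by simp
  qed
qed

lemma onb_sum_orth_decomp:
  assumes "subspace_on X S" "onb_on X S B"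
  shows "(\<lambda>y. \<Sum>b\<in>B. inner_on X b f * b y) \<in> S"
    and "h \<in> S \<Longrightarrow> inner_on X h (\<lambda>x. f x - (\<Sum>b\<in>B. inner_on X b f * b x)) = 0"
proof -
  have B: "finite B" "B \<subseteq> S" "orthonormal_on X B"
    using assms(2) unfolding onb_on_def orthonormal_on_def by auto
  show "(\<lambda>y. \<Sum>b\<in>B. inner_on X b f * b y) \<in> S"
    using B assms(1) by (intro subspace_on_sum) auto
  assume "h \<in> S"
  then have "inner_on X h (orth_residual X B f)
      = inner_on X (\<lambda>y. \<Sum>b\<in>B. inner_on X b h * b y) (orth_residual X B f)"
    using onb_on_expansion[OF assms(2,1)] by metis
  then show "inner_on X h (\<lambda>x. f x - (\<Sum>b\<in>B. inner_on X b f * b x)) = 0"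
    using inner_on_orth_residual[OF B(1,3)]
    unfolding orth_residual_def inner_on_sum_left by simp
qed

lemma proj_on_eq_onb_sum:
  assumes "finite X" "subspace_on X S" "onb_on X S B"
  shows "proj_on X S f = (\<lambda>y. \<Sum>b\<in>B. inner_on X b f * b y)"
  using onb_sum_orth_decomp[OF assms(2,3)] by (intro proj_on_unique[OF assms(1,2)]) auto

lemma proj_on_eq_some_onb_sum:
  assumes "finite X" "subspace_on X S"
  shows "proj_on X S f = (\<lambda>y. \<Sum>b\<in>(SOME B. onb_on X S B). inner_on X b f * b y)"
  using proj_on_eq_onb_sum[OF assms onb_on_some[OF assms]] .

lemma proj_on_in:
  assumes "finite X" "subspace_on X S"
  shows "proj_on X S f \<in> S"
  unfolding proj_on_eq_some_onb_sum[OF assms]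
  by (rule onb_sum_orth_decomp(1)[OF assms(2) onb_on_some[OF assms]])

lemma proj_on_orth:
  assumes "finite X" "subspace_on X S" "h \<in> S"
  shows "inner_on X h (\<lambda>x. f x - proj_on X S f x) = 0"
  unfolding proj_on_eq_some_onb_sum[OF assms(1,2)]
  by (rule onb_sum_orth_decomp(2)[OF assms(2) onb_on_some[OF assms(1,2)] assms(3)])

lemma proj_on_id:
  assumes "finite X" "subspace_on X S" "f \<in> S"
  shows "proj_on X S f = f"
  using proj_on_unique[OF assms(1,2,3)] by (simp add: inner_on_def)

lemma proj_on_sum:
  assumes "finite X" "subspace_on X S"
  shows "proj_on X S (\<lambda>y. \<Sum>i\<in>I. c i * h i y) = (\<lambda>y. \<Sum>i\<in>I. c i * proj_on X S (h i) y)"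
  unfolding proj_on_eq_some_onb_sum[OF assms] inner_on_sum_right
  by (simp add: sum_distrib_left sum_distrib_right mult.assoc sum.swap[of _ I])

lemma proj_on_diff:
  assumes "finite X" "subspace_on X S"
  shows "proj_on X S (\<lambda>y. f y - g y) = (\<lambda>y. proj_on X S f y - proj_on X S g y)"
  unfolding proj_on_eq_some_onb_sum[OF assms] inner_on_diff_right
  by (simp add: left_diff_distrib sum_subtractf)

lemma sqnorm_proj_on_le:
  assumes "finite X" "subspace_on X S"
  shows "sqnorm_on X (proj_on X S f) \<le> sqnorm_on X f"
proof -
  let ?p = "proj_on X S f"
  let ?r = "\<lambda>x. f x - ?p x"
  have orth: "inner_on X ?p ?r = 0" using proj_on_orth[OF assms proj_on_in[OF assms]] .
  then have p_f: "inner_on X ?p f = inner_on X ?p ?p" unfolding inner_on_diff_right by simp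
  have "of_real (sqnorm_on X ?r) = inner_on X ?r ?r" by (simp add: inner_on_self)
  also have "\<dots> = inner_on X f ?r" using orth unfolding inner_on_diff_left by simp
  also have "\<dots> = inner_on X f f - cnj (inner_on X ?p f)"
    unfolding inner_on_diff_right by (simp flip: inner_on_commute)
  also have "\<dots> = of_real (sqnorm_on X f - sqnorm_on X ?p)" unfolding p_f inner_on_self by simp
  finally have "sqnorm_on X ?r = sqnorm_on X f - sqnorm_on X ?p" by (simp only: of_real_eq_iff)
  then show ?thesis using sqnorm_on_nonneg[of X ?r] by simp
qed

section \<open>Trace\<close>

definition linear_on :: "('i \<Rightarrow> complex) set \<Rightarrow> (('i \<Rightarrow> complex) \<Rightarrow> ('j \<Rightarrow> complex)) \<Rightarrow> bool" where
  "linear_on S T \<longleftrightarrow> (\<forall>B c. finite B \<longrightarrow> B \<subseteq> S \<longrightarrow>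
     T (\<lambda>y. \<Sum>b\<in>B. c b * b y) = (\<lambda>y. \<Sum>b\<in>B. c b * T b y))"

lemma trace_on_eq_sum_delta:
  assumes "finite X" "subspace_on X S" "linear_on S T"
  shows "trace_on X S T = (\<Sum>x\<in>X. T (proj_on X S (\<lambda>y. if y = x then 1 else 0)) x)"
proof -
  define B where "B = (SOME B. onb_on X S B)"
  have B: "onb_on X S B" unfolding B_def using onb_on_some[OF assms(1,2)] .
  then have B_sub: "finite B" "B \<subseteq> S" unfolding onb_on_def by auto
  have T_lin: "T (\<lambda>y. \<Sum>b\<in>B. c b * b y) = (\<lambda>y. \<Sum>b\<in>B. c b * T b y)" for c
    using assms(3) B_sub unfolding linear_on_def by blast
  have "T (proj_on X S (\<lambda>y. if y = x then 1 else 0)) = (\<lambda>y. \<Sum>b\<in>B. cnj (b x) * T b y)"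
    if "x \<in> X" for x
  proof -
    have "inner_on X b (\<lambda>y. if y = x then 1 else 0) = cnj (b x)" for b
      unfolding inner_on_def using that assms(1) by (simp add: if_distrib cong: if_cong)
    then show ?thesis unfolding proj_on_eq_onb_sum[OF assms(1,2) B] T_lin by simp
  qed
  then have "(\<Sum>x\<in>X. T (proj_on X S (\<lambda>y. if y = x then 1 else 0)) x)
      = (\<Sum>x\<in>X. \<Sum>b\<in>B. cnj (b x) * T b x)"
    by simp
  also have "\<dots> = (\<Sum>b\<in>B. inner_on X b (T b))"
    unfolding inner_on_def by (rule sum.swap)
  finally show ?thesis unfolding trace_on_def B_def by simp
qed

lemma trace_on_scale: "trace_on X S (\<lambda>b x. c * T b x) = c * trace_on X S T"
  unfolding trace_on_def Let_def inner_on_scale_right by (simp add: sum_distrib_left)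

lemma trace_on_cong:
  assumes "finite X" "subspace_on X S" "\<And>b. b \<in> S \<Longrightarrow> T b = T' b"
  shows "trace_on X S T = trace_on X S T'"
proof -
  have "(SOME B. onb_on X S B) \<subseteq> S" using onb_on_some[OF assms(1,2)] unfolding onb_on_def by blast
  then show ?thesis unfolding trace_on_def Let_def using assms(3) by (intro sum.cong) auto
qed

lemma trace_on_sums:
  assumes "finite X" "subspace_on X S" "\<And>b x. b \<in> S \<Longrightarrow> (\<lambda>j. T j b x) sums U b x"
  shows "(\<lambda>j. trace_on X S (T j)) sums trace_on X S U"
proof -
  define B where "B = (SOME B. onb_on X S B)"
  have "B \<subseteq> S" unfolding B_def using onb_on_some[OF assms(1,2)] unfolding onb_on_def by auto
  then have "(\<lambda>j. \<Sum>b\<in>B. \<Sum>x\<in>X. cnj (b x) * T j b x) sums (\<Sum>b\<in>B. \<Sum>x\<in>X. cnj (b x) * U b x)"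
    using assms(3) by (intro sums_sum sums_mult) auto
  then show ?thesis unfolding trace_on_def Let_def inner_on_def B_def .
qed

lemma norm_trace_on_le:
  assumes "finite X" "subspace_on X S" "\<And>b. b \<in> S \<Longrightarrow> sqnorm_on X (T b) \<le> sqnorm_on X b"
  shows "cmod (trace_on X S T) \<le> real (card X) ^ 2"
proof -
  define B where "B = (SOME B. onb_on X S B)"
  have B: "onb_on X S B" unfolding B_def using onb_on_some[OF assms(1,2)] .
  then have B_sub: "finite B" "B \<subseteq> S" and B_orth: "orthonormal_on X B"
    unfolding onb_on_def orthonormal_on_def by auto
  note B_unit = sqnorm_orthonormal_on[OF B_orth]
  have card_B: "card B \<le> card X" using card_orthonormal_le[OF assms(1) B_sub(1) B_orth] .
  have "cmod (inner_on X b (T b)) \<le> real (card X)" if b: "b \<in> B" for b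
  proof -
    have "cmod (cnj (b x) * T b x) \<le> 1" if x: "x \<in> X" for x
    proof -
      have "(cmod (b x))\<^sup>2 \<le> 1"
        using sqnorm_on_ge_component[OF assms(1) x, of b] B_unit[OF b] by simp
      moreover have "(cmod (T b x))\<^sup>2 \<le> 1"
        using sqnorm_on_ge_component[OF assms(1) x, of "T b"] assms(3)[of b] B_unit[OF b] B_sub b
        by auto
      ultimately show ?thesis by (simp add: norm_mult mult_le_one abs_square_le_1)
    qed
    then have "cmod (inner_on X b (T b)) \<le> (\<Sum>x\<in>X. 1)"
      unfolding inner_on_def by (intro order_trans[OF norm_sum] sum_mono)
    then show ?thesis by simp
  qed
  then have "cmod (\<Sum>b\<in>B. inner_on X b (T b)) \<le> (\<Sum>b\<in>B. real (card X))"
    by (intro order_trans[OF norm_sum] sum_mono)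
  then have "cmod (trace_on X S T) \<le> real (card B) * real (card X)"
    unfolding trace_on_def Let_def B_def[symmetric] by simp
  also have "\<dots> \<le> real (card X) ^ 2"
    using card_B by (simp add: power2_eq_square mult_right_mono)
  finally show ?thesis .
qed

section \<open>Alternating binomial sums\<close>

lemma sum_binomial_alternating_Suc:
  fixes a :: "nat \<Rightarrow> 'a::comm_ring_1"
  shows "(\<Sum>j\<le>Suc k. of_nat (Suc k choose j) * (-1)^j * a j)
       = (\<Sum>j\<le>k. of_nat (k choose j) * (-1)^j * a j) - (\<Sum>j\<le>k. of_nat (k choose j) * (-1)^j * a (Suc j))"
proof -
  have "(\<Sum>j\<le>k. of_nat (k choose j) * (-1)^j * a j) = (\<Sum>j\<le>Suc k. of_nat (k choose j) * (-1)^j * a j)"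
    by (simp add: binomial_eq_0)
  also have "\<dots> = a 0 + (\<Sum>j\<le>k. of_nat (k choose Suc j) * (-1)^(Suc j) * a (Suc j))"
    by (subst sum.atMost_Suc_shift) simp
  finally have shifted: "(\<Sum>j\<le>k. of_nat (k choose j) * (-1)^j * a j)
      = a 0 + (\<Sum>j\<le>k. of_nat (k choose Suc j) * (-1)^(Suc j) * a (Suc j))" .
  have "(\<Sum>j\<le>k. of_nat (Suc k choose Suc j) * (-1)^(Suc j) * a (Suc j))
      = (\<Sum>j\<le>k. of_nat (k choose Suc j) * (-1)^(Suc j) * a (Suc j))
        - (\<Sum>j\<le>k. of_nat (k choose j) * (-1)^j * a (Suc j))"
    unfolding sum_subtractf[symmetric] by (intro sum.cong refl) (simp add: algebra_simps)
  then show ?thesis using shifted by (subst sum.atMost_Suc_shift) simp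
qed

lemma binomial_alternating_eq_cauchy_product:
  fixes \<tau> :: "'a::field_char_0" and y :: "nat \<Rightarrow> 'a"
  shows "(-\<tau>)^k / fact k * (\<Sum>j\<le>k. of_nat (k choose j) * (-1)^j * y j)
    = (\<Sum>i\<le>k. ((-\<tau>)^i / fact i) * (\<tau>^(k-i) / fact (k-i) * y (k-i)))"
proof -
  have "(\<Sum>i\<le>k. ((-\<tau>)^i / fact i) * (\<tau>^(k-i) / fact (k-i) * y (k-i)))
      = (\<Sum>j\<le>k. ((-\<tau>)^(k-j) / fact (k-j)) * (\<tau>^j / fact j * y j))"
    by (rule sum.reindex_bij_witness[where i="\<lambda>j. k - j" and j="\<lambda>i. k - i"]) auto
  also have "\<dots> = (\<Sum>j\<le>k. (-\<tau>)^k / fact k * (of_nat (k choose j) * (-1)^j * y j))"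
  proof (intro sum.cong refl)
    fix j assume "j \<in> {..k}"
    then have j: "j \<le> k" by simp
    have "(-\<tau>)^k = (-\<tau>)^(k-j) * (-\<tau>)^j" using j by (simp flip: power_add)
    moreover have "(-\<tau>)^j * (-1)^j = \<tau>^j" by (simp flip: power_mult_distrib)
    ultimately show "((-\<tau>)^(k-j) / fact (k-j)) * (\<tau>^j / fact j * y j)
        = (-\<tau>)^k / fact k * (of_nat (k choose j) * (-1)^j * y j)"
      unfolding binomial_fact[OF j] by (simp add: field_simps)
  qed
  finally show ?thesis by (simp add: sum_distrib_left)
qed

section \<open>Graphs with a vertex space\<close>

locale vertex_space_graph =
  fixes V :: "'v set" and E :: "'e set" and d :: "'e \<Rightarrow> 'v \<times> 'v"
    and Gs :: "'v \<Rightarrow> ('e \<Rightarrow> complex) set"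
  assumes graph: "finite_simple_graph V E d" and vertex_space: "vertex_space V E d Gs"
begin

abbreviation Ev :: "'v \<Rightarrow> 'e set" where "Ev \<equiv> edges_at E d"

definition nbrs :: "'v \<Rightarrow> 'v set" where
  "nbrs v = {w\<in>V. adj E d v w}"

lemma finite_V: "finite V" and finite_E: "finite E"
  using graph unfolding finite_simple_graph_def by auto

lemma ends_in_V: "e \<in> E \<Longrightarrow> fst (d e) \<in> V \<and> snd (d e) \<in> V"
  using graph unfolding finite_simple_graph_def by auto

lemma no_loop: "e \<in> E \<Longrightarrow> fst (d e) \<noteq> snd (d e)"
  using graph unfolding finite_simple_graph_def by auto

lemma edge_eqI: "e \<in> E \<Longrightarrow> e' \<in> E \<Longrightarrow> {fst (d e), snd (d e)} = {fst (d e'), snd (d e')} \<Longrightarrow> e = e'"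
  using graph unfolding finite_simple_graph_def by blast

lemma edges_at_iff: "e \<in> Ev v \<longleftrightarrow> e \<in> E \<and> (fst (d e) = v \<or> snd (d e) = v)"
  unfolding edges_at_def by auto

lemma finite_edges_at: "finite (Ev v)"
  using finite_E unfolding edges_at_def by auto

lemma card_edges_at_le: "card (Ev v) \<le> card E"
  using finite_E unfolding edges_at_def by (intro card_mono) auto

lemma subspace_on_Gs: "v \<in> V \<Longrightarrow> subspace_on (Ev v) (Gs v)"
  using vertex_space unfolding vertex_space_def by auto

lemma finite_nbrs: "finite (nbrs v)"
  using finite_V unfolding nbrs_def by auto

lemma edge_betw_eq:
  assumes "e \<in> E" "{fst (d e), snd (d e)} = {v, w}"
  shows "edge_betw E d v w = e"
  unfolding edge_betw_def
proof (rule the_equality)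
  show "e \<in> E \<and> {fst (d e), snd (d e)} = {v, w}" using assms by simp
  fix e' assume "e' \<in> E \<and> {fst (d e'), snd (d e')} = {v, w}"
  then show "e' = e" using edge_eqI[of e' e] assms by auto
qed

lemma adjD:
  assumes "adj E d v w"
  shows "edge_betw E d v w \<in> E" "{fst (d (edge_betw E d v w)), snd (d (edge_betw E d v w))} = {v, w}"
    and "v \<noteq> w" "v \<in> V" "w \<in> V"
proof -
  obtain e where e: "e \<in> E" "{fst (d e), snd (d e)} = {v, w}" "v \<noteq> w"
    using assms unfolding adj_def by blast
  then show "edge_betw E d v w \<in> E" "{fst (d (edge_betw E d v w)), snd (d (edge_betw E d v w))} = {v, w}"
    "v \<noteq> w" using edge_betw_eq by auto
  have "v \<in> {fst (d e), snd (d e)}" "w \<in> {fst (d e), snd (d e)}" using e by auto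
  then show "v \<in> V" "w \<in> V" using ends_in_V[OF e(1)] by auto
qed

lemma edge_betw_in_edges_at:
  assumes "adj E d v w"
  shows "edge_betw E d v w \<in> Ev v" "edge_betw E d v w \<in> Ev w"
  using adjD[OF assms] unfolding edges_at_iff by (auto simp: doubleton_eq_iff)

lemma other_end_edge_betw:
  assumes "adj E d v w"
  shows "other_end d (edge_betw E d v w) v = w"
  using adjD[OF assms] unfolding other_end_def by (auto simp: doubleton_eq_iff)

lemma other_endD:
  assumes "e \<in> Ev v"
  shows "adj E d v (other_end d e v)" "edge_betw E d v (other_end d e v) = e"
proof -
  have e: "e \<in> E" "fst (d e) = v \<or> snd (d e) = v" using assms edges_at_iff by auto
  have "{fst (d e), snd (d e)} = {v, other_end d e v}" "v \<noteq> other_end d e v"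
    using e no_loop[OF e(1)] unfolding other_end_def by auto
  then show "adj E d v (other_end d e v)" "edge_betw E d v (other_end d e v) = e"
    using e(1) edge_betw_eq unfolding adj_def by blast+
qed

lemma other_end_values_eq_sum_A_max:
  "(if e' \<in> Ev v then F (other_end d e' v, e') else 0) = (\<Sum>w\<in>nbrs v. A_max E d v w (\<lambda>e. F (w, e)) e')"
proof (cases "e' \<in> Ev v")
  case True
  let ?u = "other_end d e' v"
  have "A_max E d v w (\<lambda>e. F (w, e)) e' = (if w = ?u then F (w, e') else 0)" if "w \<in> nbrs v" for w
    using other_end_edge_betw[of v w] other_endD(2)[OF True] that
    unfolding A_max_def nbrs_def by auto
  moreover have "?u \<in> nbrs v"
    using other_endD(1)[OF True] adjD(5) unfolding nbrs_def by blast
  ultimately show ?thesis using True finite_nbrs by simp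
next
  case False
  have "A_max E d v w (\<lambda>e. F (w, e)) e' = 0" if "w \<in> nbrs v" for w
    using edge_betw_in_edges_at(1)[of v w] that False unfolding nbrs_def A_max_def by auto
  then show ?thesis using False by simp
qed

lemma idx_eq_Sigma: "idx V E d = Sigma V Ev"
  unfolding idx_def by auto

lemma finite_idx: "finite (idx V E d)"
  unfolding idx_eq_Sigma using finite_V finite_edges_at by auto

lemma sum_idx: "(\<Sum>x\<in>idx V E d. f x) = (\<Sum>v\<in>V. \<Sum>e\<in>Ev v. f (v, e))"
  unfolding idx_eq_Sigma using finite_V finite_edges_at by (simp add: sum.Sigma)

lemma subspace_on_vspace: "subspace_on (idx V E d) (vspace V E d Gs)"
  unfolding subspace_on_def
proof (intro conjI ballI allI impI)
  show "(\<lambda>_. 0) \<in> vspace V E d Gs"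
    unfolding vspace_def using subspace_on_zero[OF subspace_on_Gs] by auto
  fix f assume f: "f \<in> vspace V E d Gs"
  then have f_at: "(\<lambda>e. f (v, e)) \<in> Gs v" if "v \<in> V" for v
    using that unfolding vspace_def by auto
  show "(\<lambda>x. f x + g x) \<in> vspace V E d Gs" if "g \<in> vspace V E d Gs" for g
    using that f subspace_on_add[OF subspace_on_Gs f_at] unfolding vspace_def by auto
  show "(\<lambda>x. c * f x) \<in> vspace V E d Gs" for c
    using f subspace_on_scale[OF subspace_on_Gs f_at] unfolding vspace_def by auto
  fix x assume x: "x \<notin> idx V E d"
  obtain v e where x_eq: "x = (v, e)" by force
  show "f x = 0"
  proof (cases "v \<in> V")
    case True
    then have "e \<notin> Ev v" using x x_eq unfolding idx_def by auto
    then show ?thesis using subspace_on_outside[OF subspace_on_Gs[OF True] f_at[OF True]] x_eq by simp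
  next
    case False
    then show ?thesis using f x_eq by (simp add: vspace_def)
  qed
qed

lemma cmod_le_sqnorm_vspace:
  assumes "F \<in> vspace V E d Gs"
  shows "(cmod (F x))\<^sup>2 \<le> sqnorm_on (idx V E d) F"
proof (cases "x \<in> idx V E d")
  case True
  then show ?thesis using sqnorm_on_ge_component[OF finite_idx] by blast
next
  case False
  then show ?thesis
    using subspace_on_outside[OF subspace_on_vspace assms] sqnorm_on_nonneg by simp
qed

section \<open>The adjacency operator\<close>

definition adjacency_op :: "('v \<times> 'e \<Rightarrow> complex) \<Rightarrow> ('v \<times> 'e \<Rightarrow> complex)" where
  "adjacency_op F = (\<lambda>(v, e). if v \<in> V then
     proj_on (Ev v) (Gs v) (\<lambda>e'. if e' \<in> Ev v then F (other_end d e' v, e') else 0) e else 0)"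

lemma adjacency_op_in_vspace: "adjacency_op F \<in> vspace V E d Gs"
  unfolding vspace_def adjacency_op_def using proj_on_in[OF finite_edges_at subspace_on_Gs] by auto

lemma adjacency_op_pow_in_vspace: "F \<in> vspace V E d Gs \<Longrightarrow> (adjacency_op ^^ j) F \<in> vspace V E d Gs"
  by (cases j) (simp_all add: adjacency_op_in_vspace)

lemma adjacency_op_block:
  assumes "v \<in> V"
  shows "(\<lambda>e. adjacency_op F (v, e)) = (\<lambda>e. \<Sum>w\<in>nbrs v. A_G E d Gs v w (\<lambda>e. F (w, e)) e)"
proof -
  have "(\<lambda>e. adjacency_op F (v, e))
      = proj_on (Ev v) (Gs v) (\<lambda>e'. \<Sum>w\<in>nbrs v. 1 * A_max E d v w (\<lambda>e. F (w, e)) e')"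
    unfolding adjacency_op_def other_end_values_eq_sum_A_max using assms by simp
  then show ?thesis
    unfolding A_G_def proj_on_sum[OF finite_edges_at subspace_on_Gs[OF assms]] by simp
qed

lemma disc_lap_eq_diff_adjacency_op:
  assumes "F \<in> vspace V E d Gs"
  shows "disc_lap V E d Gs F = (\<lambda>x. F x - adjacency_op F x)"
proof
  fix x :: "'v \<times> 'e"
  obtain v e where x_eq: "x = (v, e)" by force
  show "disc_lap V E d Gs F x = F x - adjacency_op F x"
  proof (cases "v \<in> V")
    case True
    have F_at: "(\<lambda>e. F (v, e)) \<in> Gs v" using assms True by (simp add: vspace_def)
    let ?g = "\<lambda>e'. if e' \<in> Ev v then F (other_end d e' v, e') else 0"
    have "(\<lambda>e'. if e' \<in> Ev v then F (v, e') - F (other_end d e' v, e') else 0)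
       = (\<lambda>e'. (\<lambda>e. F (v, e)) e' - ?g e')"
      using subspace_on_outside[OF subspace_on_Gs[OF True] F_at] by auto
    then have "disc_lap V E d Gs F x = proj_on (Ev v) (Gs v) (\<lambda>e'. (\<lambda>e. F (v, e)) e' - ?g e') e"
      unfolding disc_lap_def using True x_eq by simp
    also have "\<dots> = F x - adjacency_op F x"
      unfolding proj_on_diff[OF finite_edges_at subspace_on_Gs[OF True]]
        proj_on_id[OF finite_edges_at subspace_on_Gs[OF True] F_at]
      unfolding adjacency_op_def using True x_eq by simp
    finally show ?thesis .
  next
    case False
    then show ?thesis using assms x_eq unfolding disc_lap_def adjacency_op_def vspace_def by simp
  qed
qed

lemma adjacency_op_sum:
  "adjacency_op (\<lambda>x. \<Sum>i\<in>I. c i * H i x) = (\<lambda>x. \<Sum>i\<in>I. c i * adjacency_op (H i) x)"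
proof
  fix x :: "'v \<times> 'e"
  obtain v e where x_eq: "x = (v, e)" by force
  show "adjacency_op (\<lambda>x. \<Sum>i\<in>I. c i * H i x) x = (\<Sum>i\<in>I. c i * adjacency_op (H i) x)"
  proof (cases "v \<in> V")
    case True
    have "(\<lambda>e'. if e' \<in> Ev v then \<Sum>i\<in>I. c i * H i (other_end d e' v, e') else 0)
      = (\<lambda>e'. \<Sum>i\<in>I. c i * (if e' \<in> Ev v then H i (other_end d e' v, e') else 0))"
      by (auto simp: if_distrib[of "\<lambda>z. c _ * z"])
    then show ?thesis
      unfolding adjacency_op_def using True x_eq by (simp add: proj_on_sum[OF finite_edges_at subspace_on_Gs[OF True]])
  next
    case False
    then show ?thesis unfolding adjacency_op_def using x_eq by simp
  qed
qed

lemma adjacency_op_pow_sum: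
  "(adjacency_op ^^ j) (\<lambda>x. \<Sum>i\<in>I. c i * H i x) = (\<lambda>x. \<Sum>i\<in>I. c i * (adjacency_op ^^ j) (H i) x)"
  by (induction j) (simp_all add: adjacency_op_sum)

lemma linear_on_adjacency_op_pow: "linear_on S (adjacency_op ^^ j)"
  unfolding linear_on_def using adjacency_op_pow_sum[where H="\<lambda>b. b"] by blast

lemma sqnorm_adjacency_op_le:
  assumes "F \<in> vspace V E d Gs"
  shows "sqnorm_on (idx V E d) (adjacency_op F) \<le> real (card (idx V E d)) * sqnorm_on (idx V E d) F"
proof -
  let ?n = "sqnorm_on (idx V E d) F"
  let ?out = "\<lambda>v e'. if e' \<in> Ev v then F (other_end d e' v, e') else 0"
  have "sqnorm_on (idx V E d) (adjacency_op F) = (\<Sum>v\<in>V. sqnorm_on (Ev v) (proj_on (Ev v) (Gs v) (?out v)))"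
    unfolding sqnorm_on_def sum_idx by (intro sum.cong refl) (simp add: adjacency_op_def)
  also have "\<dots> \<le> (\<Sum>v\<in>V. sqnorm_on (Ev v) (?out v))"
    by (intro sum_mono sqnorm_proj_on_le[OF finite_edges_at subspace_on_Gs])
  also have "\<dots> \<le> (\<Sum>v\<in>V. \<Sum>e\<in>Ev v. ?n)"
    unfolding sqnorm_on_def[of "Ev _"] by (intro sum_mono) (simp add: cmod_le_sqnorm_vspace[OF assms])
  also have "\<dots> = real (card (idx V E d)) * ?n"
    unfolding idx_eq_Sigma using finite_V finite_edges_at by (simp add: card_SigmaI sum_distrib_right)
  finally show ?thesis .
qed

lemma cmod_adjacency_op_pow_le:
  assumes "F \<in> vspace V E d Gs"
  shows "cmod ((adjacency_op ^^ j) F x)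
    \<le> sqrt (real (card (idx V E d))) ^ j * sqrt (sqnorm_on (idx V E d) F)"
proof -
  have "sqnorm_on (idx V E d) ((adjacency_op ^^ j) F) \<le> real (card (idx V E d)) ^ j * sqnorm_on (idx V E d) F"
  proof (induction j)
    case (Suc j)
    have "sqnorm_on (idx V E d) ((adjacency_op ^^ Suc j) F)
        \<le> real (card (idx V E d)) * sqnorm_on (idx V E d) ((adjacency_op ^^ j) F)"
      using sqnorm_adjacency_op_le[OF adjacency_op_pow_in_vspace[OF assms]] by simp
    also have "\<dots> \<le> real (card (idx V E d)) ^ Suc j * sqnorm_on (idx V E d) F"
      using mult_left_mono[OF Suc] by (simp add: mult.assoc)
    finally show ?case .
  qed simp
  then have "(cmod ((adjacency_op ^^ j) F x))\<^sup>2 \<le> real (card (idx V E d)) ^ j * sqnorm_on (idx V E d) F"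
    using cmod_le_sqnorm_vspace[OF adjacency_op_pow_in_vspace[OF assms]] order_trans by blast
  then show ?thesis
    using real_sqrt_le_mono by (fastforce simp: real_sqrt_mult real_sqrt_power)
qed

section \<open>The heat operator\<close>

definition heat_gen :: "real \<Rightarrow> ('v \<times> 'e \<Rightarrow> complex) \<Rightarrow> ('v \<times> 'e \<Rightarrow> complex)" where
  "heat_gen t F = (\<lambda>x. complex_of_real (- t) * disc_lap V E d Gs F x)"

lemma heat_gen_pow:
  assumes "F \<in> vspace V E d Gs"
  shows "(heat_gen t ^^ k) F
    = (\<lambda>x. (complex_of_real (-t))^k * (\<Sum>j\<le>k. of_nat (k choose j) * (-1)^j * (adjacency_op ^^ j) F x))"
proof (induction k)
  case (Suc k)
  let ?a = "\<lambda>j. (complex_of_real (-t))^k * (of_nat (k choose j) * (-1)^j)"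
  let ?G = "\<lambda>x. \<Sum>j\<le>k. ?a j * (adjacency_op ^^ j) F x"
  have G_in: "?G \<in> vspace V E d Gs"
    using adjacency_op_pow_in_vspace[OF assms] by (intro subspace_on_sum[OF subspace_on_vspace]) auto
  have "(heat_gen t ^^ Suc k) F = heat_gen t ?G"
    using Suc by (simp add: sum_distrib_left mult.assoc)
  also have "\<dots> = (\<lambda>x. complex_of_real (-t) * (?G x - (\<Sum>j\<le>k. ?a j * (adjacency_op ^^ Suc j) F x)))"
    unfolding heat_gen_def disc_lap_eq_diff_adjacency_op[OF G_in] adjacency_op_sum by simp
  also have "\<dots> = (\<lambda>x. (complex_of_real (-t))^Suc k *
      (\<Sum>j\<le>Suc k. of_nat (Suc k choose j) * (-1)^j * (adjacency_op ^^ j) F x))"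
    unfolding sum_binomial_alternating_Suc
    by (simp add: algebra_simps sum_distrib_left sum_subtractf)
  finally show ?case .
qed simp

lemma summable_norm_exp_adjacency_op:
  assumes "F \<in> vspace V E d Gs"
  shows "summable (\<lambda>j. norm (complex_of_real (t^j / fact j) * (adjacency_op ^^ j) F x))"
proof (rule summable_comparison_test'[where N=0])
  let ?q = "sqrt (real (card (idx V E d)))"
  let ?n = "sqrt (sqnorm_on (idx V E d) F)"
  show "summable (\<lambda>j. ?n * norm ((\<bar>t\<bar> * ?q)^j /\<^sub>R fact j))"
    by (intro summable_mult summable_norm_exp)
  fix j :: nat
  have "norm (norm (complex_of_real (t^j / fact j) * (adjacency_op ^^ j) F x))
      = \<bar>t\<bar>^j / fact j * cmod ((adjacency_op ^^ j) F x)"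
    by (simp add: norm_mult norm_divide norm_power power_abs)
  also have "\<dots> \<le> \<bar>t\<bar>^j / fact j * (?q ^ j * ?n)"
    by (intro mult_left_mono cmod_adjacency_op_pow_le[OF assms]) auto
  also have "\<dots> = ?n * norm ((\<bar>t\<bar> * ?q)^j /\<^sub>R fact j)"
    by (simp add: power_mult_distrib abs_mult divide_inverse)
  finally show "norm (norm (complex_of_real (t^j / fact j) * (adjacency_op ^^ j) F x))
     \<le> ?n * norm ((\<bar>t\<bar> * ?q)^j /\<^sub>R fact j)" .
qed

text \<open>Since \<open>-t\<Delta> = -t + tA\<close> with commuting summands, the exponential series of \<open>-t\<Delta>\<close> is the
  Cauchy product of those of \<open>-t\<close> and \<open>tA\<close>.\<close>

lemma op_exp_heat_gen:
  assumes "F \<in> vspace V E d Gs"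
  shows "op_exp (heat_gen t) F
    = (\<lambda>x. complex_of_real (exp (-t)) * (\<Sum>j. complex_of_real (t^j / fact j) * (adjacency_op ^^ j) F x))"
proof
  fix x
  let ?a = "\<lambda>i. complex_of_real ((-t)^i / fact i)"
  let ?b = "\<lambda>j. complex_of_real (t^j / fact j) * (adjacency_op ^^ j) F x"
  have "(\<lambda>n. (-t)^n / fact n) sums exp (-t)"
    using exp_converges[of "-t"] by (simp add: divide_inverse mult.commute)
  then have a_sums: "?a sums complex_of_real (exp (-t))" by (rule sums_of_real)
  have "norm (?a i) = norm ((-t)^i /\<^sub>R fact i)" for i
    unfolding norm_of_real real_norm_def by (simp add: divide_inverse mult.commute)
  then have "summable (\<lambda>i. norm (?a i))" using summable_norm_exp[of "-t"] by simp
  then have "(\<lambda>k. \<Sum>i\<le>k. ?a i * ?b (k - i)) sums ((\<Sum>k. ?a k) * (\<Sum>k. ?b k))"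
    by (rule Cauchy_product_sums[OF _ summable_norm_exp_adjacency_op[OF assms]])
  moreover have "(heat_gen t ^^ k) F x / of_nat (fact k) = (\<Sum>i\<le>k. ?a i * ?b (k - i))" for k
  proof -
    have "(heat_gen t ^^ k) F x / of_nat (fact k)
      = (- complex_of_real t)^k / fact k * (\<Sum>j\<le>k. of_nat (k choose j) * (-1)^j * (adjacency_op ^^ j) F x)"
      unfolding heat_gen_pow[OF assms] by simp
    also have "\<dots> = (\<Sum>i\<le>k. ((- complex_of_real t)^i / fact i) *
        ((complex_of_real t)^(k-i) / fact (k-i) * (adjacency_op ^^ (k-i)) F x))"
      by (rule binomial_alternating_eq_cauchy_product)
    finally show ?thesis by simp
  qed
  ultimately have "(\<lambda>k. (heat_gen t ^^ k) F x / of_nat (fact k)) sums (complex_of_real (exp (-t)) * (\<Sum>k. ?b k))"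
    unfolding sums_unique[OF a_sums, symmetric] by simp
  then show "op_exp (heat_gen t) F x = complex_of_real (exp (-t)) * (\<Sum>k. ?b k)"
    unfolding op_exp_def by (rule sums_unique[symmetric])
qed

definition adjacency_trace :: "nat \<Rightarrow> complex" where
  "adjacency_trace j = trace_on (idx V E d) (vspace V E d Gs) (adjacency_op ^^ j)"

lemma heat_trace_eq_series:
  shows "summable (\<lambda>j. complex_of_real (t^j / fact j) * adjacency_trace j)"
    and "heat_trace V E d Gs t
      = complex_of_real (exp (-t)) * (\<Sum>j. complex_of_real (t^j / fact j) * adjacency_trace j)"
proof -
  let ?c = "\<lambda>j. complex_of_real (t^j / fact j)"
  let ?U = "\<lambda>F x. \<Sum>j. ?c j * (adjacency_op ^^ j) F x"
  have "summable (\<lambda>j. ?c j * (adjacency_op ^^ j) F x)" if "F \<in> vspace V E d Gs" for F x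
    using summable_norm_cancel[OF summable_norm_exp_adjacency_op[OF that]] .
  then have "(\<lambda>j. trace_on (idx V E d) (vspace V E d Gs) (\<lambda>F x. ?c j * (adjacency_op ^^ j) F x))
      sums trace_on (idx V E d) (vspace V E d Gs) ?U"
    by (intro trace_on_sums[OF finite_idx subspace_on_vspace] summable_sums)
  then have U_sums: "(\<lambda>j. ?c j * adjacency_trace j) sums trace_on (idx V E d) (vspace V E d Gs) ?U"
    unfolding trace_on_scale adjacency_trace_def .
  then show "summable (\<lambda>j. ?c j * adjacency_trace j)" by (rule sums_summable)
  have "heat_trace V E d Gs t = trace_on (idx V E d) (vspace V E d Gs) (op_exp (heat_gen t))"
    unfolding heat_trace_def heat_gen_def ..
  also have "\<dots> = trace_on (idx V E d) (vspace V E d Gs) (\<lambda>F x. complex_of_real (exp (-t)) * ?U F x)"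
    by (intro trace_on_cong[OF finite_idx subspace_on_vspace]) (simp add: op_exp_heat_gen)
  also have "\<dots> = complex_of_real (exp (-t)) * (\<Sum>j. ?c j * adjacency_trace j)"
    unfolding trace_on_scale sums_unique[OF U_sums] ..
  finally show "heat_trace V E d Gs t = complex_of_real (exp (-t)) * (\<Sum>j. ?c j * adjacency_trace j)" .
qed

section \<open>Walks\<close>

text \<open>A walk from \<open>w\<close> is encoded by the list of the vertices after \<open>w\<close>.\<close>

fun walk_op :: "'v \<Rightarrow> 'v list \<Rightarrow> ('e \<Rightarrow> complex) \<Rightarrow> ('e \<Rightarrow> complex)" where
  "walk_op w [] = id"
| "walk_op w (u # us) = A_G E d Gs w u \<circ> walk_op u us"

definition walks :: "nat \<Rightarrow> 'v \<Rightarrow> 'v list set" where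
  "walks j w = {us. length us = j \<and> set us \<subseteq> V \<and> (\<forall>i<j. adj E d ((w # us) ! i) ((w # us) ! Suc i))}"

definition closed_walks :: "nat \<Rightarrow> 'v \<Rightarrow> 'v list set" where
  "closed_walks j v = {us \<in> walks j v. last (v # us) = v}"

lemma finite_walks: "finite (walks j w)"
  by (rule finite_subset[OF _ finite_lists_length_eq[OF finite_V, of j]]) (auto simp: walks_def)

lemma walks_subset_V: "us \<in> walks j w \<Longrightarrow> set us \<subseteq> V"
  by (simp add: walks_def)

lemma walks_0: "walks 0 w = {[]}"
  by (auto simp: walks_def)

lemma walks_Suc: "walks (Suc j) w = (\<lambda>(u, us). u # us) ` (SIGMA u:nbrs w. walks j u)"
proof (intro equalityI subsetI)
  fix xs assume xs: "xs \<in> walks (Suc j) w"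
  then obtain u us where xs_eq: "xs = u # us" by (cases xs) (auto simp: walks_def)
  have steps: "\<forall>i<Suc j. adj E d ((w # xs) ! i) ((w # xs) ! Suc i)" and "length us = j" "set (u # us) \<subseteq> V"
    using xs xs_eq by (auto simp: walks_def)
  moreover have "\<forall>i<j. adj E d ((u # us) ! i) ((u # us) ! Suc i)"
    using steps xs_eq by (metis Suc_mono nth_Cons_Suc)
  ultimately have "u \<in> nbrs w" "us \<in> walks j u"
    using spec[OF steps, of 0] xs_eq unfolding nbrs_def walks_def by auto
  then show "xs \<in> (\<lambda>(u, us). u # us) ` (SIGMA u:nbrs w. walks j u)" using xs_eq by force
next
  fix xs assume "xs \<in> (\<lambda>(u, us). u # us) ` (SIGMA u:nbrs w. walks j u)"
  then obtain u us where xs_eq: "xs = u # us" and u: "u \<in> nbrs w" and us: "us \<in> walks j u" by auto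
  have "adj E d ((w # xs) ! i) ((w # xs) ! Suc i)" if "i < Suc j" for i
    using u us that xs_eq unfolding nbrs_def walks_def by (cases i) auto
  then show "xs \<in> walks (Suc j) w" using xs_eq u us unfolding walks_def nbrs_def by auto
qed

lemma sum_walks_Suc: "(\<Sum>us\<in>walks (Suc j) w. g us) = (\<Sum>u\<in>nbrs w. \<Sum>us\<in>walks j u. g (u # us))"
proof -
  have "inj_on (\<lambda>(u, us). u # us) (SIGMA u:nbrs w. walks j u)" by (auto simp: inj_on_def)
  then have "(\<Sum>us\<in>walks (Suc j) w. g us) = (\<Sum>(u, us)\<in>(SIGMA u:nbrs w. walks j u). g (u # us))"
    unfolding walks_Suc by (simp add: sum.reindex split_def)
  also have "\<dots> = (\<Sum>u\<in>nbrs w. \<Sum>us\<in>walks j u. g (u # us))"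
    using finite_nbrs finite_walks by (simp add: sum.Sigma)
  finally show ?thesis .
qed

lemma A_G_sum:
  assumes "v \<in> V"
  shows "A_G E d Gs v w (\<lambda>y. \<Sum>i\<in>I. c i * h i y) = (\<lambda>y. \<Sum>i\<in>I. c i * A_G E d Gs v w (h i) y)"
proof -
  have "A_max E d v w (\<lambda>y. \<Sum>i\<in>I. c i * h i y) = (\<lambda>y. \<Sum>i\<in>I. c i * A_max E d v w (h i) y)"
    unfolding A_max_def by auto
  then show ?thesis
    unfolding A_G_def
    using proj_on_sum[OF finite_edges_at subspace_on_Gs[OF assms], where h="\<lambda>i. A_max E d v w (h i)"]
    by simp
qed

lemma walk_op_sum:
  assumes "w \<in> V" "set us \<subseteq> V"
  shows "walk_op w us (\<lambda>y. \<Sum>i\<in>I. c i * h i y) = (\<lambda>y. \<Sum>i\<in>I. c i * walk_op w us (h i) y)"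
  using assms by (induction us arbitrary: w) (simp_all add: A_G_sum)

lemma walk_op_zero:
  assumes "w \<in> V" "set us \<subseteq> V"
  shows "walk_op w us (\<lambda>_. 0) = (\<lambda>_. 0)"
  using walk_op_sum[OF assms, where I="{}"] by simp

lemma linear_on_walk_op: "w \<in> V \<Longrightarrow> set us \<subseteq> V \<Longrightarrow> linear_on S (walk_op w us)"
  unfolding linear_on_def using walk_op_sum[where h="\<lambda>b. b"] by blast

lemma adjacency_op_pow_block:
  assumes "w \<in> V"
  shows "(\<lambda>e. (adjacency_op ^^ j) F (w, e))
    = (\<lambda>e. \<Sum>us\<in>walks j w. walk_op w us (\<lambda>e. F (last (w # us), e)) e)"
  using assms
proof (induction j arbitrary: w)
  case 0
  then show ?case by (simp add: walks_0)
next
  case (Suc j)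
  have "(\<lambda>e. (adjacency_op ^^ Suc j) F (w, e))
      = (\<lambda>e. \<Sum>u\<in>nbrs w. A_G E d Gs w u (\<lambda>e. (adjacency_op ^^ j) F (u, e)) e)"
    using adjacency_op_block[OF Suc.prems] by simp
  also have "\<dots> = (\<lambda>e. \<Sum>u\<in>nbrs w. A_G E d Gs w u
      (\<lambda>e. \<Sum>us\<in>walks j u. 1 * walk_op u us (\<lambda>e. F (last (u # us), e)) e) e)"
    using Suc.IH unfolding nbrs_def by (intro ext sum.cong refl) auto
  also have "\<dots> = (\<lambda>e. \<Sum>u\<in>nbrs w. \<Sum>us\<in>walks j u. walk_op w (u # us) (\<lambda>e. F (last (w # u # us), e)) e)"
    unfolding A_G_sum[OF Suc.prems] by simp
  also have "\<dots> = (\<lambda>e. \<Sum>us\<in>walks (Suc j) w. walk_op w us (\<lambda>e. F (last (w # us), e)) e)"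
    by (simp only: sum_walks_Suc)
  finally show ?case .
qed

definition at_vertex :: "'v \<Rightarrow> ('e \<Rightarrow> complex) \<Rightarrow> ('v \<times> 'e \<Rightarrow> complex)" where
  "at_vertex v g = (\<lambda>(w, e). if w = v then g e else 0)"

lemma adjacency_op_pow_at_vertex_diag:
  assumes "v \<in> V"
  shows "(adjacency_op ^^ j) (at_vertex v g) (v, e) = (\<Sum>us\<in>closed_walks j v. walk_op v us g e)"
proof -
  have "walk_op v us (\<lambda>e. at_vertex v g (last (v # us), e))
      = (if last (v # us) = v then walk_op v us g else (\<lambda>_. 0))" if "us \<in> walks j v" for us
    using walk_op_zero[OF assms walks_subset_V[OF that]] by (auto simp: at_vertex_def)
  then have "(adjacency_op ^^ j) (at_vertex v g) (v, e)
      = (\<Sum>us\<in>walks j v. if last (v # us) = v then walk_op v us g e else 0)"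
    using fun_cong[OF adjacency_op_pow_block[OF assms], of j "at_vertex v g" e]
    by (auto intro: sum.cong)
  also have "\<dots> = (\<Sum>us\<in>closed_walks j v. walk_op v us g e)"
    unfolding closed_walks_def by (rule sum.inter_filter[OF finite_walks, symmetric])
  finally show ?thesis .
qed

lemma proj_vspace_delta:
  assumes "v \<in> V"
  shows "proj_on (idx V E d) (vspace V E d Gs) (\<lambda>y. if y = (v, e) then 1 else 0)
     = at_vertex v (proj_on (Ev v) (Gs v) (\<lambda>e'. if e' = e then 1 else 0))"
proof (rule proj_on_unique[OF finite_idx subspace_on_vspace])
  let ?g = "proj_on (Ev v) (Gs v) (\<lambda>e'. if e' = e then 1 else 0)"
  have g_in: "?g \<in> Gs v" using proj_on_in[OF finite_edges_at subspace_on_Gs[OF assms]] .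
  have "(\<lambda>e. at_vertex v ?g (w, e)) \<in> Gs w" if "w \<in> V" for w
    using g_in subspace_on_zero[OF subspace_on_Gs[OF that]] by (cases "w = v") (auto simp: at_vertex_def)
  then show "at_vertex v ?g \<in> vspace V E d Gs"
    using assms unfolding vspace_def by (auto simp: at_vertex_def)
  show "\<forall>h\<in>vspace V E d Gs. inner_on (idx V E d) h (\<lambda>x. (if x = (v, e) then 1 else 0) - at_vertex v ?g x) = 0"
  proof
    fix h assume "h \<in> vspace V E d Gs"
    then have h_at: "(\<lambda>e. h (v, e)) \<in> Gs v" using assms by (simp add: vspace_def)
    have "inner_on (idx V E d) h (\<lambda>x. (if x = (v, e) then 1 else 0) - at_vertex v ?g x)
       = (\<Sum>w\<in>V. if w = v then inner_on (Ev v) (\<lambda>e. h (v, e)) (\<lambda>e'. (if e' = e then 1 else 0) - ?g e') else 0)"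
      unfolding inner_on_def sum_idx by (intro sum.cong refl) (auto simp: at_vertex_def)
    also have "\<dots> = inner_on (Ev v) (\<lambda>e. h (v, e)) (\<lambda>e'. (if e' = e then 1 else 0) - ?g e')"
      using assms finite_V by simp
    also have "\<dots> = 0" by (rule proj_on_orth[OF finite_edges_at subspace_on_Gs[OF assms] h_at])
    finally show "inner_on (idx V E d) h (\<lambda>x. (if x = (v, e) then 1 else 0) - at_vertex v ?g x) = 0" .
  qed
qed

lemma adjacency_trace_eq_closed_walks:
  "adjacency_trace j = (\<Sum>v\<in>V. \<Sum>us\<in>closed_walks j v. trace_on (Ev v) (Gs v) (walk_op v us))"
proof -
  let ?\<delta> = "\<lambda>e e'. if e' = e then 1 else (0::complex)"
  have "adjacency_trace j = (\<Sum>v\<in>V. \<Sum>e\<in>Ev v. (adjacency_op ^^ j)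
      (proj_on (idx V E d) (vspace V E d Gs) (\<lambda>y. if y = (v, e) then 1 else 0)) (v, e))"
    unfolding adjacency_trace_def
      trace_on_eq_sum_delta[OF finite_idx subspace_on_vspace linear_on_adjacency_op_pow] sum_idx ..
  also have "\<dots> = (\<Sum>v\<in>V. \<Sum>e\<in>Ev v. \<Sum>us\<in>closed_walks j v. walk_op v us (proj_on (Ev v) (Gs v) (?\<delta> e)) e)"
    by (intro sum.cong refl) (simp add: proj_vspace_delta adjacency_op_pow_at_vertex_diag)
  also have "\<dots> = (\<Sum>v\<in>V. \<Sum>us\<in>closed_walks j v. \<Sum>e\<in>Ev v. walk_op v us (proj_on (Ev v) (Gs v) (?\<delta> e)) e)"
    by (intro sum.cong refl sum.swap)
  also have "\<dots> = (\<Sum>v\<in>V. \<Sum>us\<in>closed_walks j v. trace_on (Ev v) (Gs v) (walk_op v us))"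
  proof (intro sum.cong refl)
    fix v us assume "v \<in> V" "us \<in> closed_walks j v"
    then show "(\<Sum>e\<in>Ev v. walk_op v us (proj_on (Ev v) (Gs v) (?\<delta> e)) e) = trace_on (Ev v) (Gs v) (walk_op v us)"
      using trace_on_eq_sum_delta[OF finite_edges_at subspace_on_Gs linear_on_walk_op] walks_subset_V
      unfolding closed_walks_def by auto
  qed
  finally show ?thesis .
qed

section \<open>Closed paths\<close>

lemma closed_paths_0: "closed_paths V E d 0 = (\<lambda>v. [v]) ` V"
  unfolding closed_paths_def by auto

lemma closed_paths_1: "closed_paths V E d 1 = {}"
  unfolding closed_paths_def using adjD(3) by auto

lemma closed_walks_0: "closed_walks 0 v = {[]}"
  unfolding closed_walks_def walks_0 by simp

lemma closed_walks_1: "closed_walks 1 v = {}"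
  unfolding closed_walks_def walks_def using adjD(3) by (force simp: length_Suc_conv)

lemma closed_pathsD:
  assumes "c \<in> closed_paths V E d j" "2 \<le> j"
  shows "length c = j" "set c \<subseteq> V" "\<And>i. Suc i < j \<Longrightarrow> adj E d (c ! i) (c ! Suc i)"
    and "adj E d (c ! (j - 1)) (c ! 0)"
  using assms unfolding closed_paths_def by auto

lemma path_len_closed_paths: "c \<in> closed_paths V E d n \<Longrightarrow> path_len c = n"
  unfolding closed_paths_def path_len_def by (auto split: if_splits dest: adjD(3))

lemma foldr_A_G_eq_walk_op:
  assumes "length c = n" "i < n"
  shows "foldr (\<lambda>i acc. A_G E d Gs (c ! i) (c ! ((i + 1) mod n)) \<circ> acc) [i..<n] id
     = walk_op (c ! i) (drop (Suc i) c @ [c ! 0])"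
  using assms(2)
proof (induction "n - i" arbitrary: i)
  case (Suc k)
  show ?case
  proof (cases "Suc i = n")
    case True
    then show ?thesis using assms(1) by (simp add: upt_rec)
  next
    case False
    then have "Suc i < n" using Suc.prems by simp
    moreover have "[i..<n] = i # [Suc i..<n]" using Suc.prems by (simp add: upt_conv_Cons)
    moreover have "drop (Suc i) c = c ! Suc i # drop (Suc (Suc i)) c"
      using \<open>Suc i < n\<close> assms(1) by (simp add: Cons_nth_drop_Suc)
    ultimately show ?thesis using Suc.hyps(1)[of "Suc i"] Suc.hyps(2) by simp
  qed
qed simp

lemma weight_eq_trace_walk_op:
  assumes "c \<in> closed_paths V E d j" "2 \<le> j"
  shows "weight E d Gs c = trace_on (Ev (hd c)) (Gs (hd c)) (walk_op (hd c) (tl c @ [hd c]))"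
proof -
  have len: "length c = j" using closed_pathsD[OF assms] by simp
  then have "c \<noteq> []" using assms(2) by auto
  then have "hd c = c ! 0" by (simp add: hd_conv_nth)
  moreover have "path_len c = j" using len assms(2) unfolding path_len_def by simp
  ultimately show ?thesis
    using foldr_A_G_eq_walk_op[OF len, of 0] assms(2) unfolding weight_def Let_def by (simp add: drop_Suc)
qed

text \<open>Rotating the starting vertex to the end turns a closed path into a closed walk back to its start.\<close>

lemma closed_path_to_walk:
  assumes c: "c \<in> closed_paths V E d j" and j: "2 \<le> j"
  shows "(hd c, tl c @ [hd c]) \<in> Sigma V (closed_walks j)"
proof -
  note c_props = closed_pathsD[OF c j]
  have "c \<noteq> []" using c_props(1) j by auto
  then have hd_eq: "hd c = c ! 0" and hd_V: "hd c \<in> V" and cons_eq: "hd c # tl c @ [hd c] = c @ [hd c]"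
    using c_props(2) hd_in_set by (auto simp: hd_conv_nth[symmetric])
  have "adj E d ((c @ [hd c]) ! i) ((c @ [hd c]) ! Suc i)" if i: "i < j" for i
  proof (cases "Suc i < j")
    case True
    then show ?thesis using c_props(1,3) by (simp add: nth_append)
  next
    case False
    then have "i = j - 1" "Suc i = j" using i by auto
    then show ?thesis using c_props(1,4) hd_eq i by (simp add: nth_append)
  qed
  then have "\<forall>i<j. adj E d ((hd c # tl c @ [hd c]) ! i) ((hd c # tl c @ [hd c]) ! Suc i)"
    unfolding cons_eq by blast
  then have "tl c @ [hd c] \<in> walks j (hd c)"
    unfolding walks_def using c_props(1,2) hd_V \<open>c \<noteq> []\<close> by (auto dest: list.set_sel(2))
  then show ?thesis using hd_V unfolding closed_walks_def by simp
qed

lemma closed_walk_to_path: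
  assumes v: "v \<in> V" and us: "us \<in> closed_walks j v" and j: "2 \<le> j"
  shows "v # butlast us \<in> closed_paths V E d j"
proof -
  have len: "length us = j" and us_V: "set us \<subseteq> V" and last: "last (v # us) = v"
    and steps: "\<forall>i<j. adj E d ((v # us) ! i) ((v # us) ! Suc i)"
    using us unfolding closed_walks_def walks_def by auto
  have "v # butlast us = take j (v # us)"
    using len j by (cases j) (simp_all add: butlast_conv_take)
  then have nth_eq: "(v # butlast us) ! i = (v # us) ! i" if "i < j" for i
    using that by simp
  have "us \<noteq> []" using len j by auto
  then have "(v # us) ! j = v" using last len by (cases j) (auto simp: last_conv_nth)
  then have "adj E d ((v # butlast us) ! (j - 1)) ((v # butlast us) ! 0)"
    using spec[OF steps, of "j - 1"] nth_eq[of "j - 1"] j by simp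
  moreover have "adj E d ((v # butlast us) ! i) ((v # butlast us) ! Suc i)" if "Suc i < j" for i
    using steps that nth_eq[of i] nth_eq[of "Suc i"] by simp
  ultimately show ?thesis
    unfolding closed_paths_def using j len v us_V by (auto dest: in_set_butlastD)
qed

lemma sum_weight_eq_closed_walks:
  assumes j: "2 \<le> j"
  shows "(\<Sum>c\<in>closed_paths V E d j. weight E d Gs c)
    = (\<Sum>v\<in>V. \<Sum>us\<in>closed_walks j v. trace_on (Ev v) (Gs v) (walk_op v us))"
proof -
  have "(\<Sum>c\<in>closed_paths V E d j. weight E d Gs c)
      = (\<Sum>(v, us)\<in>Sigma V (closed_walks j). trace_on (Ev v) (Gs v) (walk_op v us))"
  proof (rule sum.reindex_bij_witness[where j="\<lambda>c. (hd c, tl c @ [hd c])" and i="\<lambda>(v, us). v # butlast us"])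
    fix c assume c: "c \<in> closed_paths V E d j"
    then have "c \<noteq> []" using closed_pathsD(1)[OF c j] j by auto
    then show "(case (hd c, tl c @ [hd c]) of (v, us) \<Rightarrow> v # butlast us) = c" by simp
    show "(hd c, tl c @ [hd c]) \<in> Sigma V (closed_walks j)" using closed_path_to_walk[OF c j] .
    show "(case (hd c, tl c @ [hd c]) of (v, us) \<Rightarrow> trace_on (Ev v) (Gs v) (walk_op v us)) = weight E d Gs c"
      using weight_eq_trace_walk_op[OF c j] by simp
  next
    fix p assume "p \<in> Sigma V (closed_walks j)"
    then obtain v us where p_eq: "p = (v, us)" and v: "v \<in> V" and us: "us \<in> closed_walks j v" by auto
    have "us \<noteq> []" "last (v # us) = v"
      using us j unfolding closed_walks_def walks_def by auto
    then show "(hd (case p of (v, us) \<Rightarrow> v # butlast us), tl (case p of (v, us) \<Rightarrow> v # butlast us)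
        @ [hd (case p of (v, us) \<Rightarrow> v # butlast us)]) = p"
      using p_eq append_butlast_last_id[of us] by simp
    show "(case p of (v, us) \<Rightarrow> v # butlast us) \<in> closed_paths V E d j"
      using closed_walk_to_path[OF v us j] p_eq by simp
  qed
  also have "\<dots> = (\<Sum>v\<in>V. \<Sum>us\<in>closed_walks j v. trace_on (Ev v) (Gs v) (walk_op v us))"
    using finite_V finite_walks unfolding closed_walks_def by (simp add: sum.Sigma)
  finally show ?thesis .
qed

lemma adjacency_trace_eq_sum_weight: "adjacency_trace j = (\<Sum>c\<in>closed_paths V E d j. weight E d Gs c)"
proof -
  consider "j = 0" | "j = 1" | "2 \<le> j" by linarith
  then show ?thesis
  proof cases
    case 1
    have "(\<Sum>c\<in>closed_paths V E d j. weight E d Gs c) = (\<Sum>v\<in>V. weight E d Gs [v])"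
      unfolding 1 closed_paths_0 by (subst sum.reindex) (auto simp: inj_on_def)
    then show ?thesis
      unfolding adjacency_trace_eq_closed_walks 1 closed_walks_0 by (simp add: weight_def path_len_def)
  next
    case 2
    then show ?thesis using adjacency_trace_eq_closed_walks closed_paths_1 closed_walks_1 by simp
  next
    case 3
    then show ?thesis using adjacency_trace_eq_closed_walks sum_weight_eq_closed_walks by simp
  qed
qed

section \<open>Convergence\<close>

lemma sqnorm_A_G_le:
  assumes "adj E d w u"
  shows "sqnorm_on (Ev w) (A_G E d Gs w u g) \<le> sqnorm_on (Ev u) g"
proof -
  let ?e = "edge_betw E d w u"
  have "sqnorm_on (Ev w) (A_G E d Gs w u g) \<le> sqnorm_on (Ev w) (A_max E d w u g)"
    unfolding A_G_def by (rule sqnorm_proj_on_le[OF finite_edges_at subspace_on_Gs[OF adjD(4)[OF assms]]])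
  also have "sqnorm_on (Ev w) (A_max E d w u g) = (\<Sum>e\<in>Ev w. if e = ?e then (cmod (g ?e))\<^sup>2 else 0)"
    unfolding sqnorm_on_def A_max_def by (intro sum.cong refl) auto
  also have "\<dots> = (cmod (g ?e))\<^sup>2"
    using edge_betw_in_edges_at(1)[OF assms] finite_edges_at by simp
  also have "\<dots> \<le> sqnorm_on (Ev u) g"
    using sqnorm_on_ge_component[OF finite_edges_at edge_betw_in_edges_at(2)[OF assms]] .
  finally show ?thesis .
qed

lemma sqnorm_walk_op_le:
  "us \<in> walks j w \<Longrightarrow> sqnorm_on (Ev w) (walk_op w us g) \<le> sqnorm_on (Ev (last (w # us))) g"
proof (induction j arbitrary: w us)
  case 0
  then show ?case by (simp add: walks_0)
next
  case (Suc j)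
  then obtain u us' where us_eq: "us = u # us'" and u: "u \<in> nbrs w" and us': "us' \<in> walks j u"
    unfolding walks_Suc by auto
  have "sqnorm_on (Ev w) (walk_op w us g) = sqnorm_on (Ev w) (A_G E d Gs w u (walk_op u us' g))"
    using us_eq by simp
  also have "\<dots> \<le> sqnorm_on (Ev u) (walk_op u us' g)"
    using u unfolding nbrs_def by (intro sqnorm_A_G_le) simp
  also have "\<dots> \<le> sqnorm_on (Ev (last (u # us'))) g" by (rule Suc.IH[OF us'])
  finally show ?case using us_eq by simp
qed

lemma norm_weight_le:
  assumes c: "c \<in> closed_paths V E d j"
  shows "cmod (weight E d Gs c) \<le> real (card E) ^ 2"
proof -
  have "cmod (weight E d Gs c) \<le> real (card (Ev (hd c))) ^ 2"
  proof -
    consider "j = 0" | "j = 1" | "2 \<le> j" by linarith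
    then show ?thesis
    proof cases
      case 1
      then obtain v where v: "v \<in> V" and c_eq: "c = [v]" using c closed_paths_0 by auto
      have "weight E d Gs c = trace_on (Ev v) (Gs v) id"
        unfolding c_eq by (simp add: weight_def path_len_def)
      then show ?thesis
        using norm_trace_on_le[OF finite_edges_at subspace_on_Gs[OF v]] c_eq by simp
    next
      case 2
      then show ?thesis using c closed_paths_1 by simp
    next
      case 3
      have v: "hd c \<in> V" and walk: "tl c @ [hd c] \<in> walks j (hd c)"
        using closed_path_to_walk[OF c 3] unfolding closed_walks_def by auto
      show ?thesis
        unfolding weight_eq_trace_walk_op[OF c 3]
        using sqnorm_walk_op_le[OF walk] by (intro norm_trace_on_le[OF finite_edges_at subspace_on_Gs[OF v]]) simp
    qed
  qed
  also have "\<dots> \<le> real (card E) ^ 2" using card_edges_at_le by simp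
  finally show ?thesis .
qed

lemma finite_closed_paths: "finite (closed_paths V E d n)"
proof (cases "n = 0")
  case True
  then show ?thesis using finite_V by (simp add: closed_paths_0)
next
  case False
  then have "closed_paths V E d n \<subseteq> {xs. set xs \<subseteq> V \<and> length xs = n}"
    unfolding closed_paths_def by auto
  then show ?thesis using finite_subset finite_lists_length_eq[OF finite_V] by blast
qed

lemma card_closed_paths_le: "real (card (closed_paths V E d n)) \<le> real (card V) ^ n + real (card V)"
proof (cases "n = 0")
  case True
  have "card (closed_paths V E d n) \<le> card V"
    unfolding True closed_paths_0 by (rule card_image_le[OF finite_V])
  then show ?thesis by (simp add: True)
next
  case False
  then have "closed_paths V E d n \<subseteq> {xs. set xs \<subseteq> V \<and> length xs = n}"
    unfolding closed_paths_def by auto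
  then have "card (closed_paths V E d n) \<le> card V ^ n"
    using card_mono[OF finite_lists_length_eq[OF finite_V]] card_lists_length_eq[OF finite_V] by metis
  then have "real (card (closed_paths V E d n)) \<le> real (card V) ^ n"
    by (metis of_nat_le_iff of_nat_power)
  then show ?thesis using of_nat_0_le_iff[of "card V"] by linarith
qed

lemma has_sum_closed_paths_by_length:
  fixes f :: "'v list \<Rightarrow> 'a::banach"
  assumes summable_norms: "summable (\<lambda>n. \<Sum>c\<in>closed_paths V E d n. norm (f c))"
  shows "(f has_sum (\<Sum>n. \<Sum>c\<in>closed_paths V E d n. f c)) (all_closed_paths V E d)"
proof -
  let ?C = "closed_paths V E d"
  have all_eq: "all_closed_paths V E d = snd ` Sigma UNIV ?C" unfolding all_closed_paths_def by force
  have inj: "inj_on snd (Sigma UNIV ?C)" using path_len_closed_paths by (auto simp: inj_on_def)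
  have "summable (\<lambda>n. norm (\<Sum>c\<in>?C n. norm (f c)))"
    using summable_norms by (simp add: sum_nonneg)
  then have "(\<lambda>n. \<Sum>c\<in>?C n. norm (f c)) summable_on UNIV"
    by (rule norm_summable_imp_summable_on)
  moreover have "disjoint_family_on ?C UNIV"
    unfolding disjoint_family_on_def using path_len_closed_paths by blast
  ultimately have "(\<lambda>c. norm (f c)) summable_on (\<Union>n\<in>UNIV. ?C n)"
    using finite_closed_paths by (intro summable_on_UnionI) auto
  then have "f summable_on all_closed_paths V E d"
    unfolding all_closed_paths_def by (rule abs_summable_summable)
  then have summable_Sigma: "(f \<circ> snd) summable_on Sigma UNIV ?C"
    unfolding all_eq summable_on_reindex[OF inj] .
  have norm_summable: "summable (\<lambda>n. norm (\<Sum>c\<in>?C n. f c))"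
    using summable_norms by (rule summable_comparison_test'[where N=0]) (simp add: norm_sum)
  then have has_sum_lengths: "((\<lambda>n. \<Sum>c\<in>?C n. f c) has_sum (\<Sum>n. \<Sum>c\<in>?C n. f c)) UNIV"
    by (rule norm_summable_imp_has_sum[OF _ summable_sums[OF summable_norm_cancel[OF norm_summable]]])
  have "((f \<circ> snd) has_sum (\<Sum>n. \<Sum>c\<in>?C n. f c)) (Sigma UNIV ?C)"
  proof (rule has_sum_SigmaI[OF _ has_sum_lengths summable_Sigma])
    show "((\<lambda>c. (f \<circ> snd) (n, c)) has_sum (\<Sum>c\<in>?C n. f c)) (?C n)" for n
      using finite_closed_paths by simp
  qed
  then show ?thesis unfolding all_eq has_sum_reindex[OF inj] .
qed

lemma summable_norm_closed_path_terms:
  "summable (\<lambda>n. \<Sum>c\<in>closed_paths V E d n. norm (complex_of_real (t ^ n / fact n) * weight E d Gs c))"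
proof (rule summable_comparison_test'[where N=0])
  let ?K = "real (card E) ^ 2" and ?N = "real (card V)"
  show "summable (\<lambda>n. ?K * (inverse (fact n) * (?N * \<bar>t\<bar>)^n) + ?N * ?K * (inverse (fact n) * \<bar>t\<bar>^n))"
    by (intro summable_add summable_mult summable_exp)
  fix n :: nat
  have "(\<Sum>c\<in>closed_paths V E d n. norm (complex_of_real (t ^ n / fact n) * weight E d Gs c))
      \<le> (\<Sum>c\<in>closed_paths V E d n. \<bar>t\<bar>^n / fact n * ?K)"
  proof (intro sum_mono)
    fix c assume "c \<in> closed_paths V E d n"
    then have "\<bar>t\<bar>^n / fact n * cmod (weight E d Gs c) \<le> \<bar>t\<bar>^n / fact n * ?K"
      by (intro mult_left_mono norm_weight_le) auto
    then show "norm (complex_of_real (t ^ n / fact n) * weight E d Gs c) \<le> \<bar>t\<bar>^n / fact n * ?K"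
      by (simp add: norm_mult norm_divide norm_power)
  qed
  also have "\<dots> = real (card (closed_paths V E d n)) * (\<bar>t\<bar>^n / fact n * ?K)"
    by simp
  also have "\<dots> \<le> (?N ^ n + ?N) * (\<bar>t\<bar>^n / fact n * ?K)"
    by (intro mult_right_mono card_closed_paths_le) simp
  also have "\<dots> = ?K * (inverse (fact n) * (?N * \<bar>t\<bar>)^n) + ?N * ?K * (inverse (fact n) * \<bar>t\<bar>^n)"
    by (simp add: field_simps power_mult_distrib)
  finally show "norm (\<Sum>c\<in>closed_paths V E d n. norm (complex_of_real (t ^ n / fact n) * weight E d Gs c))
      \<le> ?K * (inverse (fact n) * (?N * \<bar>t\<bar>)^n) + ?N * ?K * (inverse (fact n) * \<bar>t\<bar>^n)"
    by (simp add: sum_nonneg)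
qed

theorem heat_trace_closed_path_expansion:
  "summable (\<lambda>n. \<Sum>c\<in>closed_paths V E d n. complex_of_real (t ^ n / fact n) * weight E d Gs c)
    \<and> heat_trace V E d Gs t = complex_of_real (exp (- t)) *
        (\<Sum>n. \<Sum>c\<in>closed_paths V E d n. complex_of_real (t ^ n / fact n) * weight E d Gs c)
    \<and> (\<lambda>c. complex_of_real (t ^ path_len c / fact (path_len c)) * weight E d Gs c)
        summable_on all_closed_paths V E d
    \<and> heat_trace V E d Gs t = complex_of_real (exp (- t)) *
        (\<Sum>\<^sub>\<infinity>c\<in>all_closed_paths V E d. complex_of_real (t ^ path_len c / fact (path_len c)) * weight E d Gs c)"
proof -
  let ?f = "\<lambda>c. complex_of_real (t ^ path_len c / fact (path_len c)) * weight E d Gs c"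
  let ?g = "\<lambda>n. \<Sum>c\<in>closed_paths V E d n. complex_of_real (t ^ n / fact n) * weight E d Gs c"
  have g_eq: "?g = (\<lambda>n. complex_of_real (t ^ n / fact n) * adjacency_trace n)"
    by (simp add: adjacency_trace_eq_sum_weight sum_distrib_left)
  have f_eq: "?f c = complex_of_real (t ^ n / fact n) * weight E d Gs c" if "c \<in> closed_paths V E d n" for c n
    using path_len_closed_paths[OF that] by simp
  have "summable (\<lambda>n. \<Sum>c\<in>closed_paths V E d n. norm (?f c))"
    using summable_norm_closed_path_terms[of t] f_eq by (simp cong: sum.cong)
  then have "(?f has_sum (\<Sum>n. \<Sum>c\<in>closed_paths V E d n. ?f c)) (all_closed_paths V E d)"
    by (rule has_sum_closed_paths_by_length)
  then have has_sum: "(?f has_sum (\<Sum>n. ?g n)) (all_closed_paths V E d)"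
    using f_eq by (simp cong: sum.cong)
  have "?g = (\<lambda>n. complex_of_real (t ^ n / fact n) * adjacency_trace n)"
    by (simp add: adjacency_trace_eq_sum_weight sum_distrib_left)
  then have "summable ?g" "heat_trace V E d Gs t = complex_of_real (exp (- t)) * (\<Sum>n. ?g n)"
    using heat_trace_eq_series[of t] by simp_all
  then show ?thesis
    using has_sum_imp_summable[OF has_sum] infsumI[OF has_sum] by simp
qed

end

theorem theorem7p7:
  fixes V :: "'v set" and E :: "'e set" and d :: "'e \<Rightarrow> 'v \<times> 'v"
    and Gs :: "'v \<Rightarrow> ('e \<Rightarrow> complex) set" and t :: real
  assumes "finite_simple_graph V E d"
    and "\<forall>v\<in>V. edges_at E d v \<noteq> {}"
    and "vertex_space V E d Gs"
  shows "summable (\<lambda>n. \<Sum>c\<in>closed_paths V E d n. complex_of_real (t ^ n / fact n) * weight E d Gs c)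
    \<and> heat_trace V E d Gs t = complex_of_real (exp (- t)) *
        (\<Sum>n. \<Sum>c\<in>closed_paths V E d n. complex_of_real (t ^ n / fact n) * weight E d Gs c)
    \<and> (\<lambda>c. complex_of_real (t ^ path_len c / fact (path_len c)) * weight E d Gs c)
        summable_on all_closed_paths V E d
    \<and> heat_trace V E d Gs t = complex_of_real (exp (- t)) *
        (\<Sum>\<^sub>\<infinity>c\<in>all_closed_paths V E d. complex_of_real (t ^ path_len c / fact (path_len c)) * weight E d Gs c)"
proof -
  interpret vertex_space_graph V E d Gs
    using assms(1,3) by unfold_locales
  show ?thesis by (rule heat_trace_closed_path_expansion)
qed

end
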